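(* Let $\delta\in(0,1)$. Assume Assumption (B), Assumption (D2), and that the scaling limits $\gamma_1,\gamma_2$ exist. If $\gamma>1$ and $\gamma'<0$, then with probability at least $1-\delta$ over the choice of $\theta^0$, $$\lim_{m\to+\infty}\sup_{t\in[0,\widetilde T_{\mathrm{eff},\bar\beta}]}\frac{\|\theta_w(t)-\theta_w(0)\|_2}{\|\theta_w(0)\|_2}=+\infty\quad\text{and}\quad\lim_{m\to+\infty}\sup_{t\in[0,\widetilde T_{\mathrm{eff},\bar\beta}]}\frac{\|\theta_{w,z}(t)\|_2}{\|\theta_w(t)\|_2}=1.$$
   Context: Setting. Data $\{(x_i,y_i)\}_{i=1}^n\subset\mathbb R^d\times\mathbb R$; width $m$; scales $\nu=\nu(m),\varepsilon=\varepsilon(m)>0$. Parameters $\theta=(\theta_a,\theta_w)$, $\theta_a=(a_k)_{k=1}^m$, $\theta_w=(w_k)_{k=1}^m$, $w_k\in\mathbb R^d$. Network $f_\theta(x)=\sum_{k=1}^m\nu a_k\sigma(\varepsilon w_k^\top x)$, $e_i=f_\theta(x_i)-y_i$. Initialization $\theta^0=\theta(0)$: $a_k(0)\sim\mathcal N(0,1)$, $w_k(0)\sim\mathcal N(0,I_d)$ independent. Dynamics: $\frac{da_k}{dt}=-\frac\varepsilon\nu\frac1n\sum_ie_i\frac{\sigma(\varepsilon w_k^\top x_i)}{\varepsilon}$, $\frac{dw_k}{dt}=-\frac\nu\varepsilon\frac1n\sum_ie_ia_k\sigma'(\varepsilon w_k^\top x_i)x_i$. Scaling limits $\gamma_1=\lim_{m\to\infty}-\frac{\log\nu}{\log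 m}$, $\gamma_2=\lim_{m\to\infty}-\frac{\log\varepsilon}{\log m}$ exist; $\gamma=\gamma_1+\gamma_2$, $\gamma'=\gamma_1-\gamma_2$. $\theta_{w,z}(t)=(\langle w_1(t),\hat z\rangle,\dots,\langle w_m(t),\hat z\rangle)^\top$. Neuron energy $p_k(t)=\max\{|a_k(t)|,\|w_k(t)\|_\infty\}$, $p_{\max}(t)=\max_kp_k(t)$, $\psi(t)=\sup_{0\le s\le t}p_{\max}(s)$. For $\beta>1$, $\tilde\tau=-\gamma'/\beta$ and $\widetilde T_{\mathrm{eff},\beta}=\inf\{t>0: m\nu\varepsilon\psi^3(t)+\varepsilon\psi^2(t)>m^{-\tilde\tau}\}$. $\bar\beta=\max\{-1024\frac{\gamma'}{\gamma-1},-512\gamma'\}$. Assumption (B): $\sigma\in C^2(\mathbb R)$, $\|\sigma'\|_\infty,\|\sigma''\|_\infty\le C_L$ for a universal $C_L>0$, $\sigma(0)=0$, $\sigma'(0)=1$. Assumption (D2): universal $c>0$ with $\|x_i\|_2\ge1/c$, $|y_i|\le c$; $z=\frac1n\sum_iy_ix_i$ satisfies $1/c\le\|z\|_2\le c$; $\hat z=z/\|z\|_2$. *)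

theory Defs
  imports "HOL-Probability.Probability"
begin

definition net_out :: "nat \<Rightarrow> real \<Rightarrow> real \<Rightarrow> (real \<Rightarrow> real) \<Rightarrow> (nat \<Rightarrow> real)
    \<Rightarrow> (nat \<Rightarrow> real^'d) \<Rightarrow> real^'d \<Rightarrow> real" where
  "net_out m nu eps \<sigma> a w xx = (\<Sum>k<m. nu * a k * \<sigma> (eps * (w k \<bullet> xx)))"

definition theta_w_norm :: "nat \<Rightarrow> (nat \<Rightarrow> real^'d) \<Rightarrow> real" where
  "theta_w_norm m w = sqrt (\<Sum>k<m. (norm (w k))^2)"

definition theta_wz_norm :: "nat \<Rightarrow> real^'d \<Rightarrow> (nat \<Rightarrow> real^'d) \<Rightarrow> real" where
  "theta_wz_norm m zh w = sqrt (\<Sum>k<m. (w k \<bullet> zh)^2)"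

definition neuron_energy :: "(nat \<Rightarrow> real) \<Rightarrow> (nat \<Rightarrow> real^'d) \<Rightarrow> nat \<Rightarrow> real" where
  "neuron_energy a w k = max \<bar>a k\<bar> (infnorm (w k))"

definition p_max :: "nat \<Rightarrow> (nat \<Rightarrow> real) \<Rightarrow> (nat \<Rightarrow> real^'d) \<Rightarrow> real" where
  "p_max m a w = Max ((\<lambda>k. neuron_energy a w k) ` {..<m})"

definition psi :: "nat \<Rightarrow> (real \<Rightarrow> nat \<Rightarrow> real) \<Rightarrow> (real \<Rightarrow> nat \<Rightarrow> real^'d) \<Rightarrow> real \<Rightarrow> real" where
  "psi m a w t = Sup ((\<lambda>s. p_max m (a s) (w s)) ` {0..t})"

text \<open>Effective time T_eff,beta (value in extended reals; +infinity if the set is empty),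
  with tau~ = - gamma' / beta.\<close>
definition T_eff :: "nat \<Rightarrow> real \<Rightarrow> real \<Rightarrow> real \<Rightarrow> real \<Rightarrow>
    (real \<Rightarrow> nat \<Rightarrow> real) \<Rightarrow> (real \<Rightarrow> nat \<Rightarrow> real^'d) \<Rightarrow> ereal" where
  "T_eff m nu eps gamma' \<beta> a w =
     (let tau = - gamma' / \<beta> in
      Inf (ereal ` {t. t > 0 \<and>
        real m * nu * eps * (psi m a w t)^3 + eps * (psi m a w t)^2 > real m powr (- tau)}))"

definition beta_bar :: "real \<Rightarrow> real \<Rightarrow> real" where
  "beta_bar gamma gamma' = max (-1024 * gamma' / (gamma - 1)) (-512 * gamma')"

end

theory Submission
  imports Defs
begin

text \<open>
  For a fixed width \<open>m\<close> the gradient flow is compared with its linearization at the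
  initialization. The loss decreases along the flow, so the residuals stay bounded, and a
  Gronwall argument for the energy \<open>r\<^sup>2 a\<^sub>k\<^sup>2 + |w\<^sub>k|\<^sup>2\<close> (\<open>r = \<nu>/\<epsilon>\<close>) keeps every neuron of
  the order of its initial size up to the time \<open>t\<^sub>m = \<lambda>\<^sub>m / r\<close>, \<open>\<lambda>\<^sub>m = m\<^sup>2\<^sup>\<kappa>\<close>. On this interval
  \<open>\<sigma>' \<approx> 1\<close>, \<open>a\<^sub>k \<approx> a\<^sub>k(0)\<close> and the outputs are small, hence \<open>w\<^sub>k(t\<^sub>m) \<approx> w\<^sub>k(0) + \<lambda>\<^sub>m a\<^sub>k(0) z\<close>.
  Initial weights of size \<open>O(m\<^sup>\<kappa>)\<close> together with \<open>\<Sum> a\<^sub>k(0)\<^sup>2 \<ge> m/8\<close> make the displacement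
  \<open>\<lambda>\<^sub>m a(0) z\<close> dominate both \<open>\<theta>\<^sub>w(0)\<close> and the part of \<open>\<theta>\<^sub>w(t\<^sub>m)\<close> orthogonal to \<open>z\<close>, which gives
  the two limits. The conditions \<open>\<gamma> > 1\<close> and \<open>\<gamma>' < 0\<close> turn every error term into a negative
  power of \<open>m\<close> and keep \<open>t\<^sub>m\<close> below \<open>T\<^sub>e\<^sub>f\<^sub>f\<close>; Gaussian tail bounds, Hoeffding's inequality and a
  Borel--Cantelli argument show that the initialization is eventually good with probability at
  least \<open>1 - \<delta>\<close>.
\<close>

section \<open>Bounds from derivatives\<close>

lemma norm_diff_le_of_vector_derivative_bound:
  fixes f :: "real \<Rightarrow> 'a::real_normed_vector"
  assumes "a \<le> b"
    and deriv: "\<And>u. u \<in> {a..b} \<Longrightarrow> (f has_vector_derivative f' u) (at u within {a..b})"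
    and bound: "\<And>u. u \<in> {a..b} \<Longrightarrow> norm (f' u) \<le> B"
  shows "norm (f b - f a) \<le> B * (b - a)"
proof -
  have "norm (f b - f a) \<le> B * norm (b - a)"
  proof (rule differentiable_bound[of "{a..b}" f "\<lambda>u h. h *\<^sub>R f' u"])
    show "(f has_derivative (\<lambda>h. h *\<^sub>R f' u)) (at u within {a..b})" if "u \<in> {a..b}" for u
      using deriv[OF that] by (simp add: has_vector_derivative_def)
    show "onorm (\<lambda>h. h *\<^sub>R f' u) \<le> B" if "u \<in> {a..b}" for u
      using bound[OF that] onorm_scaleR_left[of "\<lambda>h. h" "f' u"] by (simp add: onorm_id bounded_linear_ident)
  qed (use assms in auto)
  then show ?thesis using assms by simp
qed

lemma abs_diff_le_of_deriv_bound:
  fixes f f' :: "real \<Rightarrow> real"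
  assumes deriv: "\<And>u. (f has_real_derivative f' u) (at u)" and bound: "\<And>u. \<bar>f' u\<bar> \<le> C"
  shows "\<bar>f v - f u\<bar> \<le> C * \<bar>v - u\<bar>"
proof -
  have le: "\<bar>f q - f p\<bar> \<le> C * (q - p)" if "p \<le> q" for p q
    using norm_diff_le_of_vector_derivative_bound[OF that, of f f'] bound
    by (simp add: has_real_derivative_iff_has_vector_derivative[symmetric] has_field_derivative_at_within deriv)
  show ?thesis
    using le[of u v] le[of v u] by (cases "u \<le> v") (auto simp: abs_minus_commute)
qed

lemma le_of_nonpos_derivative:
  fixes g g' :: "real \<Rightarrow> real"
  assumes "a \<le> b"
    and deriv: "\<And>u. u \<in> {a..b} \<Longrightarrow> (g has_real_derivative g' u) (at u within {a..b})"
    and nonpos: "\<And>u. u \<in> {a..b} \<Longrightarrow> g' u \<le> 0"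
  shows "g b \<le> g a"
proof -
  obtain u where "u \<in> {a..b}" "g b - g a = g' u * (b - a)"
    using mvt_very_simple[OF \<open>a \<le> b\<close>, of g "\<lambda>u h. g' u * h"] deriv
    by (auto simp: has_field_derivative_def)
  then show ?thesis
    using nonpos[of u] mult_nonpos_nonneg[of "g' u" "b - a"] \<open>a \<le> b\<close> by simp
qed

lemma le_exp_of_derivative_le:
  fixes f f' :: "real \<Rightarrow> real"
  assumes "0 \<le> t"
    and deriv: "\<And>u. 0 \<le> u \<Longrightarrow> (f has_real_derivative f' u) (at u within {0..})"
    and le: "\<And>u. 0 \<le> u \<Longrightarrow> f' u \<le> C * f u"
  shows "f t \<le> f 0 * exp (C * t)"
proof -
  define g where "g s = f s * exp (- (C * s))" for s
  have "g t \<le> g 0"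
  proof (rule le_of_nonpos_derivative[OF assms(1)])
    fix u assume "u \<in> {0..t}"
    then have u: "0 \<le> u" by simp
    have "(g has_real_derivative (f' u - C * f u) * exp (- (C * u))) (at u within {0..})"
      unfolding g_def[abs_def] using deriv[OF u]
      by (auto intro!: derivative_eq_intros simp: algebra_simps)
    then show "(g has_real_derivative (f' u - C * f u) * exp (- (C * u))) (at u within {0..t})"
      by (rule DERIV_subset) auto
    show "(f' u - C * f u) * exp (- (C * u)) \<le> 0"
      using le[OF u] by (simp add: mult_nonpos_nonneg)
  qed
  then show ?thesis
    unfolding g_def by (simp add: exp_minus field_simps)
qed

lemma has_real_derivative_inner_const:
  fixes f :: "real \<Rightarrow> 'a::real_inner"
  assumes "(f has_vector_derivative f') F"
  shows "((\<lambda>s. f s \<bullet> v) has_real_derivative (f' \<bullet> v)) F"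
proof -
  have "((\<lambda>s. f s \<bullet> v) has_derivative (\<lambda>h. (h *\<^sub>R f') \<bullet> v)) F"
    using assms unfolding has_vector_derivative_def by (intro derivative_eq_intros) auto
  then show ?thesis unfolding has_field_derivative_def
    by (rule has_derivative_eq_rhs) (auto simp: fun_eq_iff)
qed

lemma has_real_derivative_inner_self:
  fixes f :: "real \<Rightarrow> 'a::real_inner"
  assumes "(f has_vector_derivative f') (at t within S)"
  shows "((\<lambda>s. f s \<bullet> f s) has_real_derivative (2 * (f t \<bullet> f'))) (at t within S)"
proof -
  have "((\<lambda>s. f s \<bullet> f s) has_derivative (\<lambda>h. f t \<bullet> (h *\<^sub>R f') + (h *\<^sub>R f') \<bullet> f t)) (at t within S)"
    using assms unfolding has_vector_derivative_def by (intro derivative_eq_intros) auto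
  then show ?thesis unfolding has_field_derivative_def
    by (rule has_derivative_eq_rhs) (auto simp: fun_eq_iff inner_commute algebra_simps)
qed

lemma abs_linearization_term_le:
  fixes f y a a0 s :: real
  assumes "\<bar>a - a0\<bar> \<le> Da" "\<bar>a\<bar> \<le> Ab" "\<bar>s - 1\<bar> \<le> E" "\<bar>s\<bar> \<le> C" "\<bar>f\<bar> \<le> F" "\<bar>y\<bar> \<le> c"
  shows "\<bar>- ((f - y) * a * s) - y * a0\<bar> \<le> c * (C * Da + \<bar>a0\<bar> * E) + F * Ab * C"
proof -
  have eq: "- ((f - y) * a * s) - y * a0 = - (f * a * s) + y * ((a - a0) * s + a0 * (s - 1))"
    by (simp add: algebra_simps)
  have "\<bar>f * a * s\<bar> \<le> F * Ab * C"
    unfolding abs_mult using assms by (intro mult_mono) auto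
  moreover have "\<bar>(a - a0) * s + a0 * (s - 1)\<bar> \<le> C * Da + \<bar>a0\<bar> * E"
  proof -
    have "\<bar>(a - a0) * s\<bar> \<le> C * Da"
      unfolding abs_mult using assms by (simp add: mult_mono mult.commute)
    moreover have "\<bar>a0 * (s - 1)\<bar> \<le> \<bar>a0\<bar> * E"
      unfolding abs_mult using assms by (intro mult_left_mono) auto
    ultimately show ?thesis by (smt (verit) abs_triangle_ineq)
  qed
  then have "\<bar>y * ((a - a0) * s + a0 * (s - 1))\<bar> \<le> c * (C * Da + \<bar>a0\<bar> * E)"
    unfolding abs_mult using assms by (intro mult_mono) auto
  ultimately show ?thesis
    unfolding eq by (smt (verit) abs_triangle_ineq abs_minus_cancel)
qed

section \<open>The network\<close>

locale network_data =
  fixes \<sigma> \<sigma>' \<sigma>'' :: "real \<Rightarrow> real" and CL :: real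
    and n :: nat and x :: "nat \<Rightarrow> real^'d" and y :: "nat \<Rightarrow> real" and c :: real
  assumes \<sigma>_deriv: "\<And>u. (\<sigma> has_real_derivative \<sigma>' u) (at u)"
    and \<sigma>'_deriv: "\<And>u. (\<sigma>' has_real_derivative \<sigma>'' u) (at u)"
    and \<sigma>'_bound: "\<And>u. \<bar>\<sigma>' u\<bar> \<le> CL"
    and \<sigma>''_bound: "\<And>u. \<bar>\<sigma>'' u\<bar> \<le> CL"
    and \<sigma>_0: "\<sigma> 0 = 0" and \<sigma>'_0: "\<sigma>' 0 = 1"
    and n_pos: "0 < n"
    and y_bound: "\<And>i. i < n \<Longrightarrow> \<bar>y i\<bar> \<le> c"
begin

definition z :: "real^'d" where
  "z = (1 / real n) *\<^sub>R (\<Sum>i<n. y i *\<^sub>R x i)"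

definition X :: real where
  "X = (\<Sum>i<n. norm (x i))"

text \<open>\<open>K_max\<close> bounds the rate \<open>\<surd>(loss 0) CL X\<close> of a gradient flow whose initial outputs are at
  most \<open>1\<close> in absolute value, so that every residual is at most \<open>1 + c\<close>.\<close>

definition K_max :: real where
  "K_max = sqrt (real n) * (1 + c) * CL * X"

definition lin_error_coeff :: real where
  "lin_error_coeff = X * CL * (4 * c * K_max + c * X + 16 * CL * X)"

lemma CL_ge_1: "1 \<le> CL"
  using \<sigma>'_bound[of 0] \<sigma>'_0 by simp

lemma c_nonneg: "0 \<le> c"
  using y_bound[OF n_pos] by (meson abs_ge_zero order_trans)

lemma X_nonneg: "0 \<le> X"
  unfolding X_def by (simp add: sum_nonneg)

lemma norm_x_le_X: "i < n \<Longrightarrow> norm (x i) \<le> X"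
  unfolding X_def by (rule member_le_sum) auto

lemma K_max_nonneg: "0 \<le> K_max"
  unfolding K_max_def using c_nonneg CL_ge_1 X_nonneg by simp

lemma lin_error_coeff_nonneg: "0 \<le> lin_error_coeff"
  unfolding lin_error_coeff_def using c_nonneg CL_ge_1 X_nonneg K_max_nonneg by simp

lemma abs_\<sigma>_le: "\<bar>\<sigma> u\<bar> \<le> CL * \<bar>u\<bar>"
  using abs_diff_le_of_deriv_bound[OF \<sigma>_deriv \<sigma>'_bound, of u 0] \<sigma>_0 by simp

lemma abs_\<sigma>'_minus_1_le: "\<bar>\<sigma>' u - 1\<bar> \<le> CL * \<bar>u\<bar>"
  using abs_diff_le_of_deriv_bound[OF \<sigma>'_deriv \<sigma>''_bound, of u 0] \<sigma>'_0 by simp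

lemma abs_\<sigma>_inner_le:
  assumes "0 \<le> \<epsilon>"
  shows "\<bar>\<sigma> (\<epsilon> * (v \<bullet> x i))\<bar> \<le> CL * (\<epsilon> * norm v * norm (x i))"
proof -
  have "\<bar>\<sigma> (\<epsilon> * (v \<bullet> x i))\<bar> \<le> CL * (\<epsilon> * \<bar>v \<bullet> x i\<bar>)"
    using abs_\<sigma>_le[of "\<epsilon> * (v \<bullet> x i)"] assms by (simp add: abs_mult)
  also have "\<dots> \<le> CL * (\<epsilon> * (norm v * norm (x i)))"
    using CL_ge_1 assms Cauchy_Schwarz_ineq2 by (intro mult_left_mono) auto
  finally show ?thesis by (simp add: mult_ac)
qed

lemma abs_\<sigma>'_inner_minus_1_le:
  assumes "0 \<le> \<epsilon>"
  shows "\<bar>\<sigma>' (\<epsilon> * (v \<bullet> x i)) - 1\<bar> \<le> CL * (\<epsilon> * norm v * norm (x i))"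
proof -
  have "\<bar>\<sigma>' (\<epsilon> * (v \<bullet> x i)) - 1\<bar> \<le> CL * (\<epsilon> * \<bar>v \<bullet> x i\<bar>)"
    using abs_\<sigma>'_minus_1_le[of "\<epsilon> * (v \<bullet> x i)"] assms by (simp add: abs_mult)
  also have "\<dots> \<le> CL * (\<epsilon> * (norm v * norm (x i)))"
    using CL_ge_1 assms Cauchy_Schwarz_ineq2 by (intro mult_left_mono) auto
  finally show ?thesis by (simp add: mult_ac)
qed

lemma abs_net_out_le:
  assumes "0 < \<nu>" "0 < \<epsilon>" "i < n"
    and "\<And>k. k < m \<Longrightarrow> \<bar>a k\<bar> \<le> A \<and> norm (w k) \<le> W"
  shows "\<bar>net_out m \<nu> \<epsilon> \<sigma> a w (x i)\<bar> \<le> real m * \<nu> * A * CL * (\<epsilon> * W) * X"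
proof -
  have "\<bar>net_out m \<nu> \<epsilon> \<sigma> a w (x i)\<bar> \<le> (\<Sum>k<m. \<nu> * \<bar>a k\<bar> * (CL * (\<epsilon> * norm (w k) * norm (x i))))"
    unfolding net_out_def
  proof (intro order_trans[OF sum_abs] sum_mono)
    fix k
    show "\<bar>\<nu> * a k * \<sigma> (\<epsilon> * (w k \<bullet> x i))\<bar> \<le> \<nu> * \<bar>a k\<bar> * (CL * (\<epsilon> * norm (w k) * norm (x i)))"
      using mult_left_mono[OF abs_\<sigma>_inner_le, of \<epsilon> "\<nu> * \<bar>a k\<bar>"] assms(1,2) by (simp add: abs_mult)
  qed
  also have "\<dots> \<le> (\<Sum>k<m. \<nu> * A * (CL * (\<epsilon> * W * X)))"
  proof (intro sum_mono)
    fix k assume "k \<in> {..<m}"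
    then have "\<bar>a k\<bar> \<le> A" "norm (w k) \<le> W" using assms(4) by auto
    moreover from this have "0 \<le> A" "0 \<le> W" by (meson abs_ge_zero norm_ge_zero order_trans)+
    ultimately show "\<nu> * \<bar>a k\<bar> * (CL * (\<epsilon> * norm (w k) * norm (x i))) \<le> \<nu> * A * (CL * (\<epsilon> * W * X))"
      using assms(1,2) CL_ge_1 norm_x_le_X[OF assms(3)] by (intro mult_mono mult_left_mono) auto
  qed
  finally show ?thesis by (simp add: mult_ac)
qed

lemma mean_weighted_le:
  assumes "\<And>i. i < n \<Longrightarrow> 0 \<le> f i \<and> f i \<le> C"
  shows "(1 / real n) * (\<Sum>i<n. f i * norm (x i)) \<le> C * X"
proof -
  have "(\<Sum>i<n. f i * norm (x i)) \<le> (\<Sum>i<n. C * norm (x i))"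
    using assms by (intro sum_mono mult_right_mono) auto
  also have "\<dots> = C * X" unfolding X_def by (simp add: sum_distrib_left)
  finally have "(\<Sum>i<n. f i * norm (x i)) \<le> C * X" .
  moreover have "(1 / real n) * (\<Sum>i<n. f i * norm (x i)) \<le> 1 * (\<Sum>i<n. f i * norm (x i))"
    using assms n_pos by (intro mult_right_mono sum_nonneg) auto
  ultimately show ?thesis by simp
qed

lemma linearization_error_le:
  assumes "0 \<le> Q" "Q \<le> B" "\<bar>\<alpha>\<bar> \<le> Q" "0 \<le> t" "0 < \<epsilon>" "0 < \<nu>"
  shows "X * (c * (CL * (4 * K_max * t * Q) + \<bar>\<alpha>\<bar> * (CL * (\<epsilon> * B) * X))
           + real m * \<nu> * (4 * Q) * CL * (\<epsilon> * B) * X * (4 * Q) * CL)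
         \<le> lin_error_coeff * (t * B + \<epsilon> * B^2 + real m * \<nu> * \<epsilon> * B^3)"
proof -
  have B_nonneg: "0 \<le> B" using assms(1,2) by linarith
  from mult_left_mono[OF mult_right_mono[OF _ B_nonneg], of "\<bar>\<alpha>\<bar>" B \<epsilon>] assms(2,3,5)
  have p2: "\<epsilon> * \<bar>\<alpha>\<bar> * B \<le> \<epsilon> * B^2" by (simp add: power2_eq_square mult.assoc)
  have "Q^2 * B \<le> B^2 * B"
    using assms(1,2) B_nonneg by (intro mult_right_mono power_mono) auto
  then have p3: "real m * \<nu> * \<epsilon> * Q^2 * B \<le> real m * \<nu> * \<epsilon> * B^3"
    using assms(5,6) mult_left_mono[of "Q^2 * B" "B^2 * B" "real m * \<nu> * \<epsilon>"]
    by (simp add: power2_eq_square power3_eq_cube mult.assoc)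
  have "X * (c * (CL * (4 * K_max * t * Q) + \<bar>\<alpha>\<bar> * (CL * (\<epsilon> * B) * X))
           + real m * \<nu> * (4 * Q) * CL * (\<epsilon> * B) * X * (4 * Q) * CL)
      = X * CL * (4 * c * K_max * (t * Q) + c * X * (\<epsilon> * \<bar>\<alpha>\<bar> * B)
          + 16 * CL * X * (real m * \<nu> * \<epsilon> * Q^2 * B))"
    by (simp add: algebra_simps power2_eq_square)
  also have "\<dots> \<le> X * CL * (4 * c * K_max * (t * B) + c * X * (\<epsilon> * B^2)
      + 16 * CL * X * (real m * \<nu> * \<epsilon> * B^3))"
    using assms(2,4) X_nonneg CL_ge_1 c_nonneg K_max_nonneg
    by (intro mult_left_mono add_mono p2 p3) auto
  also have "\<dots> \<le> X * CL * ((4 * c * K_max + c * X + 16 * CL * X) * (t * B + \<epsilon> * B^2 + real m * \<nu> * \<epsilon> * B^3))"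
    unfolding distrib_left[of "4 * c * K_max + c * X + 16 * CL * X"]
    using B_nonneg assms(4-6) c_nonneg K_max_nonneg X_nonneg CL_ge_1
    by (intro mult_left_mono add_mono mult_right_mono) auto
  finally show ?thesis unfolding lin_error_coeff_def by (simp add: mult.assoc)
qed

end

section \<open>Neuron energy and effective time\<close>

lemma p_max_le:
  assumes "0 < m" "\<And>k. k < m \<Longrightarrow> \<bar>a k\<bar> \<le> B \<and> norm (w k) \<le> B"
  shows "p_max m a w \<le> B"
  unfolding p_max_def neuron_energy_def
  using assms by (subst Max_le_iff) (auto intro: order_trans[OF infnorm_le_norm])

lemma p_max_nonneg:
  assumes "0 < m"
  shows "0 \<le> p_max m a w"
proof -
  have "neuron_energy a w 0 \<le> p_max m a w"
    unfolding p_max_def using assms by (intro Max_ge) auto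
  moreover have "0 \<le> neuron_energy a w 0" unfolding neuron_energy_def by simp
  ultimately show ?thesis by linarith
qed

lemma psi_le:
  assumes "0 < m" "0 \<le> s"
    and "\<And>u k. u \<in> {0..s} \<Longrightarrow> k < m \<Longrightarrow> \<bar>a u k\<bar> \<le> B \<and> norm (w u k) \<le> B"
  shows "psi m a w s \<le> B" and "0 \<le> psi m a w s"
proof -
  have bound: "p_max m (a u) (w u) \<le> B" if "u \<in> {0..s}" for u
    using assms that by (intro p_max_le) auto
  show "psi m a w s \<le> B"
    unfolding psi_def using bound assms(2) by (intro cSup_least) auto
  have "p_max m (a 0) (w 0) \<le> psi m a w s"
    unfolding psi_def using bound assms(2) by (intro cSup_upper) (auto simp: bdd_above_def intro!: exI[of _ B])
  then show "0 \<le> psi m a w s"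
    using p_max_nonneg[OF assms(1), of "a 0" "w 0"] by linarith
qed

lemma T_eff_ge:
  assumes "\<And>s. 0 < s \<Longrightarrow> s \<le> t \<Longrightarrow>
    real m * \<nu> * \<epsilon> * (psi m a w s)^3 + \<epsilon> * (psi m a w s)^2 \<le> real m powr (- (- \<gamma>' / \<beta>))"
  shows "ereal t \<le> T_eff m \<nu> \<epsilon> \<gamma>' \<beta> a w"
  unfolding T_eff_def Let_def
proof (rule Inf_greatest)
  fix q assume "q \<in> ereal ` {s. 0 < s \<and>
    real m * \<nu> * \<epsilon> * (psi m a w s)^3 + \<epsilon> * (psi m a w s)^2 > real m powr (- (- \<gamma>' / \<beta>))}"
  then obtain s where "q = ereal s" "0 < s"
    "real m * \<nu> * \<epsilon> * (psi m a w s)^3 + \<epsilon> * (psi m a w s)^2 > real m powr (- (- \<gamma>' / \<beta>))"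
    by auto
  with assms[of s] show "ereal t \<le> q" by force
qed

lemma T_eff_ge_of_bounded:
  assumes "0 < m" "0 \<le> \<nu>" "0 \<le> \<epsilon>"
    and bounded: "\<And>u k. u \<in> {0..t} \<Longrightarrow> k < m \<Longrightarrow> \<bar>a u k\<bar> \<le> B \<and> norm (w u k) \<le> B"
    and small: "real m * \<nu> * \<epsilon> * B^3 + \<epsilon> * B^2 \<le> real m powr (- (- \<gamma>' / \<beta>))"
  shows "ereal t \<le> T_eff m \<nu> \<epsilon> \<gamma>' \<beta> a w"
proof (rule T_eff_ge)
  fix s assume "0 < s" "s \<le> t"
  with bounded have "psi m a w s \<le> B" "0 \<le> psi m a w s"
    using psi_le[OF \<open>0 < m\<close>, where s = s and a = a and w = w and B = B] by auto
  then have "real m * \<nu> * \<epsilon> * (psi m a w s)^3 + \<epsilon> * (psi m a w s)^2 \<le> real m * \<nu> * \<epsilon> * B^3 + \<epsilon> * B^2"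
    using assms(2,3) by (intro add_mono mult_left_mono power_mono) auto
  with small show "real m * \<nu> * \<epsilon> * (psi m a w s)^3 + \<epsilon> * (psi m a w s)^2 \<le> real m powr (- (- \<gamma>' / \<beta>))"
    by linarith
qed

section \<open>The gradient flow at a fixed width\<close>

locale gradient_flow = network_data \<sigma> \<sigma>' \<sigma>'' CL n x y c
  for \<sigma> \<sigma>' \<sigma>'' CL n and x :: "nat \<Rightarrow> real^'d" and y c +
  fixes m :: nat and \<nu> \<epsilon> :: real
    and a :: "real \<Rightarrow> nat \<Rightarrow> real" and w :: "real \<Rightarrow> nat \<Rightarrow> real^'d"
  assumes \<nu>_pos: "0 < \<nu>" and \<epsilon>_pos: "0 < \<epsilon>"
    and a_ode: "\<And>k t. k < m \<Longrightarrow> 0 \<le> t \<Longrightarrow>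
        ((\<lambda>s. a s k) has_real_derivative
          (- (\<epsilon> / \<nu>) * (1 / real n) *
             (\<Sum>i<n. (net_out m \<nu> \<epsilon> \<sigma> (a t) (w t) (x i) - y i) * (\<sigma> (\<epsilon> * (w t k \<bullet> x i)) / \<epsilon>))))
        (at t within {0..})"
    and w_ode: "\<And>k t. k < m \<Longrightarrow> 0 \<le> t \<Longrightarrow>
        ((\<lambda>s. w s k) has_vector_derivative
          (- (\<nu> / \<epsilon>) * (1 / real n)) *\<^sub>R
             (\<Sum>i<n. ((net_out m \<nu> \<epsilon> \<sigma> (a t) (w t) (x i) - y i)
                     * a t k * \<sigma>' (\<epsilon> * (w t k \<bullet> x i))) *\<^sub>R x i))
        (at t within {0..})"
begin

definition residual :: "real \<Rightarrow> nat \<Rightarrow> real" where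
  "residual t i = net_out m \<nu> \<epsilon> \<sigma> (a t) (w t) (x i) - y i"

definition a_dot :: "real \<Rightarrow> nat \<Rightarrow> real" where
  "a_dot t k = - (\<epsilon> / \<nu>) * (1 / real n) * (\<Sum>i<n. residual t i * (\<sigma> (\<epsilon> * (w t k \<bullet> x i)) / \<epsilon>))"

definition w_dot :: "real \<Rightarrow> nat \<Rightarrow> real^'d" where
  "w_dot t k = (- (\<nu> / \<epsilon>) * (1 / real n)) *\<^sub>R
     (\<Sum>i<n. (residual t i * a t k * \<sigma>' (\<epsilon> * (w t k \<bullet> x i))) *\<^sub>R x i)"

definition loss :: "real \<Rightarrow> real" where
  "loss t = (\<Sum>i<n. (residual t i)^2)"

definition r :: real where
  "r = \<nu> / \<epsilon>"

definition K :: real where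
  "K = sqrt (loss 0) * CL * X"

lemma r_pos: "0 < r"
  unfolding r_def using \<nu>_pos \<epsilon>_pos by simp

lemma K_nonneg: "0 \<le> K"
  unfolding K_def loss_def using X_nonneg CL_ge_1 by (simp add: sum_nonneg)

lemma a_has_derivative:
  "k < m \<Longrightarrow> 0 \<le> t \<Longrightarrow> ((\<lambda>s. a s k) has_real_derivative a_dot t k) (at t within {0..})"
  using a_ode unfolding a_dot_def residual_def by blast

lemma w_has_derivative:
  "k < m \<Longrightarrow> 0 \<le> t \<Longrightarrow> ((\<lambda>s. w s k) has_vector_derivative w_dot t k) (at t within {0..})"
  using w_ode unfolding w_dot_def residual_def by blast

lemma residual_has_derivative:
  assumes "0 \<le> t"
  shows "((\<lambda>s. residual s i) has_real_derivative
    (\<Sum>k<m. \<nu> * (a_dot t k * \<sigma> (\<epsilon> * (w t k \<bullet> x i))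
              + a t k * (\<sigma>' (\<epsilon> * (w t k \<bullet> x i)) * (\<epsilon> * (w_dot t k \<bullet> x i))))))
    (at t within {0..})"
  unfolding residual_def net_out_def
proof (intro derivative_eq_intros)
  fix k assume k: "k \<in> {..<m}"
  show "((\<lambda>s. a s k) has_real_derivative a_dot t k) (at t within {0..})"
    using a_has_derivative k assms by auto
  have "((\<lambda>s. w s k \<bullet> x i) has_real_derivative (w_dot t k \<bullet> x i)) (at t within {0..})"
    using w_has_derivative[of k t] k assms by (intro has_real_derivative_inner_const) auto
  then show "((\<lambda>s. \<sigma> (\<epsilon> * (w s k \<bullet> x i))) has_real_derivative
        \<sigma>' (\<epsilon> * (w t k \<bullet> x i)) * (\<epsilon> * (w_dot t k \<bullet> x i))) (at t within {0..})"
    by (intro DERIV_chain2[OF \<sigma>_deriv] derivative_eq_intros) auto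
qed (auto simp: algebra_simps)

text \<open>\<open>a_dot\<close> and \<open>w_dot\<close> are, up to the factors \<open>\<nu> n\<close> and \<open>\<epsilon> n\<close>, the negative partial
  derivatives of the loss; hence the loss decreases at the rate of the squared speed.\<close>

lemma loss_has_derivative:
  assumes "0 \<le> t"
  shows "(loss has_real_derivative
    - 2 * real n * (\<Sum>k<m. \<nu>^2 * (a_dot t k)^2 + \<epsilon>^2 * (w_dot t k \<bullet> w_dot t k))) (at t within {0..})"
proof -
  let ?e' = "\<lambda>i. \<Sum>k<m. \<nu> * (a_dot t k * \<sigma> (\<epsilon> * (w t k \<bullet> x i))
                           + a t k * (\<sigma>' (\<epsilon> * (w t k \<bullet> x i)) * (\<epsilon> * (w_dot t k \<bullet> x i))))"
  have a_dot_sum: "(\<Sum>i<n. residual t i * \<sigma> (\<epsilon> * (w t k \<bullet> x i))) = - (\<nu> * real n) * a_dot t k" for k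
    unfolding a_dot_def using \<epsilon>_pos \<nu>_pos n_pos
    by (simp add: sum_divide_distrib[symmetric] field_simps)
  have w_dot_sum: "(\<Sum>i<n. (residual t i * a t k * \<sigma>' (\<epsilon> * (w t k \<bullet> x i))) *\<^sub>R x i)
      = (- (\<epsilon> * real n / \<nu>)) *\<^sub>R w_dot t k" for k
    unfolding w_dot_def using \<epsilon>_pos \<nu>_pos n_pos by (simp add: field_simps)
  have "(loss has_real_derivative (\<Sum>i<n. 2 * residual t i * ?e' i)) (at t within {0..})"
    unfolding loss_def[abs_def]
    by (intro derivative_eq_intros residual_has_derivative[OF assms])
       (auto simp: power2_eq_square intro: residual_has_derivative[OF assms])
  moreover have "(\<Sum>i<n. 2 * residual t i * ?e' i)
      = 2 * (\<Sum>k<m. \<nu> * a_dot t k * (\<Sum>i<n. residual t i * \<sigma> (\<epsilon> * (w t k \<bullet> x i))))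
        + 2 * (\<Sum>k<m. \<nu> * \<epsilon> * (w_dot t k \<bullet>
                 (\<Sum>i<n. (residual t i * a t k * \<sigma>' (\<epsilon> * (w t k \<bullet> x i))) *\<^sub>R x i)))"
    by (simp add: sum_distrib_left sum_distrib_right inner_sum_right sum.distrib[symmetric]
        algebra_simps sum.swap[of _ "{..<n}" "{..<m}"])
  moreover have "\<dots> = - 2 * real n * (\<Sum>k<m. \<nu>^2 * (a_dot t k)^2 + \<epsilon>^2 * (w_dot t k \<bullet> w_dot t k))"
    unfolding a_dot_sum w_dot_sum using \<nu>_pos
    by (simp add: sum_distrib_left sum.distrib power2_eq_square field_simps sum_negf)
  ultimately show ?thesis by simp
qed

lemma loss_le_initial:
  assumes "0 \<le> t"
  shows "loss t \<le> loss 0"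
proof (rule le_of_nonpos_derivative[OF assms])
  fix u assume "u \<in> {0..t}"
  then show "(loss has_real_derivative
      - 2 * real n * (\<Sum>k<m. \<nu>^2 * (a_dot u k)^2 + \<epsilon>^2 * (w_dot u k \<bullet> w_dot u k))) (at u within {0..t})"
    by (intro DERIV_subset[OF loss_has_derivative]) auto
  show "- 2 * real n * (\<Sum>k<m. \<nu>^2 * (a_dot u k)^2 + \<epsilon>^2 * (w_dot u k \<bullet> w_dot u k)) \<le> 0"
    by (simp add: sum_nonneg)
qed

lemma abs_residual_le:
  assumes "0 \<le> t" "i < n"
  shows "\<bar>residual t i\<bar> \<le> sqrt (loss 0)"
proof -
  have "(residual t i)^2 \<le> loss t"
    unfolding loss_def using assms(2) by (intro member_le_sum) auto
  also have "\<dots> \<le> loss 0" by (rule loss_le_initial[OF assms(1)])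
  finally show ?thesis by (metis real_sqrt_abs real_sqrt_le_mono)
qed

lemma abs_a_dot_le:
  assumes "0 \<le> t"
  shows "\<bar>a_dot t k\<bar> \<le> K * norm (w t k) / r"
proof -
  let ?S = "\<Sum>i<n. residual t i * (\<sigma> (\<epsilon> * (w t k \<bullet> x i)) / \<epsilon>)"
  have "\<bar>?S\<bar> \<le> (\<Sum>i<n. (\<bar>residual t i\<bar> * (CL * norm (w t k))) * norm (x i))"
  proof (intro order_trans[OF sum_abs] sum_mono)
    fix i
    have "\<bar>\<sigma> (\<epsilon> * (w t k \<bullet> x i)) / \<epsilon>\<bar> \<le> CL * norm (w t k) * norm (x i)"
      using abs_\<sigma>_inner_le[of \<epsilon> "w t k" i] \<epsilon>_pos by (simp add: divide_le_eq mult_ac)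
    from mult_left_mono[OF this abs_ge_zero[of "residual t i"]]
    show "\<bar>residual t i * (\<sigma> (\<epsilon> * (w t k \<bullet> x i)) / \<epsilon>)\<bar>
        \<le> (\<bar>residual t i\<bar> * (CL * norm (w t k))) * norm (x i)"
      by (simp add: abs_mult mult_ac)
  qed
  then have "(1 / real n) * \<bar>?S\<bar> \<le> (1 / real n) * (\<Sum>i<n. (\<bar>residual t i\<bar> * (CL * norm (w t k))) * norm (x i))"
    by (intro mult_left_mono) auto
  also have "\<dots> \<le> (sqrt (loss 0) * (CL * norm (w t k))) * X"
    using abs_residual_le[OF assms] CL_ge_1 by (intro mean_weighted_le) (auto intro: mult_right_mono)
  finally have "(\<epsilon> / \<nu>) * ((1 / real n) * \<bar>?S\<bar>) \<le> (\<epsilon> / \<nu>) * ((sqrt (loss 0) * (CL * norm (w t k))) * X)"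
    using \<epsilon>_pos \<nu>_pos by (intro mult_left_mono) auto
  moreover have "\<bar>a_dot t k\<bar> = (\<epsilon> / \<nu>) * ((1 / real n) * \<bar>?S\<bar>)"
    unfolding a_dot_def using \<epsilon>_pos \<nu>_pos by (simp add: abs_mult)
  ultimately show ?thesis
    unfolding K_def r_def using \<epsilon>_pos \<nu>_pos by (simp add: field_simps)
qed

lemma norm_w_dot_le:
  assumes "0 \<le> t"
  shows "norm (w_dot t k) \<le> r * K * \<bar>a t k\<bar>"
proof -
  let ?S = "\<Sum>i<n. (residual t i * a t k * \<sigma>' (\<epsilon> * (w t k \<bullet> x i))) *\<^sub>R x i"
  have "norm ?S \<le> (\<Sum>i<n. (\<bar>residual t i\<bar> * (\<bar>a t k\<bar> * CL)) * norm (x i))"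
  proof (intro order_trans[OF norm_sum] sum_mono)
    fix i
    show "norm ((residual t i * a t k * \<sigma>' (\<epsilon> * (w t k \<bullet> x i))) *\<^sub>R x i)
        \<le> (\<bar>residual t i\<bar> * (\<bar>a t k\<bar> * CL)) * norm (x i)"
      using mult_left_mono[OF \<sigma>'_bound[of "\<epsilon> * (w t k \<bullet> x i)"],
          of "\<bar>residual t i\<bar> * \<bar>a t k\<bar> * norm (x i)"]
      by (simp add: abs_mult mult_ac)
  qed
  then have "(1 / real n) * norm ?S \<le> (1 / real n) * (\<Sum>i<n. (\<bar>residual t i\<bar> * (\<bar>a t k\<bar> * CL)) * norm (x i))"
    by (intro mult_left_mono) auto
  also have "\<dots> \<le> (sqrt (loss 0) * (\<bar>a t k\<bar> * CL)) * X"
    using abs_residual_le[OF assms] CL_ge_1 by (intro mean_weighted_le) (auto intro: mult_right_mono)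
  finally have "(\<nu> / \<epsilon>) * ((1 / real n) * norm ?S) \<le> (\<nu> / \<epsilon>) * ((sqrt (loss 0) * (\<bar>a t k\<bar> * CL)) * X)"
    using \<epsilon>_pos \<nu>_pos by (intro mult_left_mono) auto
  moreover have "norm (w_dot t k) = (\<nu> / \<epsilon>) * ((1 / real n) * norm ?S)"
    unfolding w_dot_def using \<epsilon>_pos \<nu>_pos by (simp add: abs_mult)
  ultimately show ?thesis
    unfolding K_def r_def by (simp add: mult_ac)
qed

text \<open>The weight \<open>r\<^sup>2\<close> balances the bounds \<open>|a'| \<le> K |w| / r\<close> and \<open>|w'| \<le> r K |a|\<close>, so that the
  energy obeys the linear differential inequality \<open>E' \<le> 2 K E\<close>.\<close>

definition energy :: "real \<Rightarrow> nat \<Rightarrow> real" where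
  "energy t k = r^2 * (a t k)^2 + w t k \<bullet> w t k"

lemma energy_eq: "energy t k = (r * \<bar>a t k\<bar>)^2 + (norm (w t k))^2"
  unfolding energy_def by (simp add: power_mult_distrib power2_norm_eq_inner)

lemma energy_has_derivative:
  assumes "0 \<le> u" "k < m"
  shows "((\<lambda>s. energy s k) has_real_derivative (2 * r^2 * a u k * a_dot u k + 2 * (w u k \<bullet> w_dot u k)))
    (at u within {0..})"
  unfolding energy_def[abs_def]
  by (rule derivative_eq_intros has_real_derivative_inner_self
      a_has_derivative[OF assms(2,1)] w_has_derivative[OF assms(2,1)] refl)+
     (auto simp: power2_eq_square)

lemma energy_derivative_le:
  assumes "0 \<le> u"
  shows "2 * r^2 * a u k * a_dot u k + 2 * (w u k \<bullet> w_dot u k) \<le> 2 * K * energy u k"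
proof -
  have "r^2 * a u k * a_dot u k \<le> r^2 * \<bar>a u k\<bar> * \<bar>a_dot u k\<bar>"
    using mult_left_mono[OF abs_ge_self[of "a u k * a_dot u k"], of "r^2"] by (simp add: abs_mult mult_ac)
  also have "\<dots> \<le> r^2 * \<bar>a u k\<bar> * (K * norm (w u k) / r)"
    by (intro mult_left_mono abs_a_dot_le assms) auto
  also have "\<dots> = r * K * \<bar>a u k\<bar> * norm (w u k)"
    using r_pos by (simp add: power2_eq_square field_simps)
  finally have a_part: "r^2 * a u k * a_dot u k \<le> r * K * \<bar>a u k\<bar> * norm (w u k)" .
  have "w u k \<bullet> w_dot u k \<le> norm (w u k) * norm (w_dot u k)" by (rule norm_cauchy_schwarz)
  also have "\<dots> \<le> norm (w u k) * (r * K * \<bar>a u k\<bar>)"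
    by (intro mult_left_mono norm_w_dot_le assms) auto
  finally have w_part: "w u k \<bullet> w_dot u k \<le> r * K * \<bar>a u k\<bar> * norm (w u k)" by (simp add: mult_ac)
  have "0 \<le> (r * \<bar>a u k\<bar> - norm (w u k))^2" by simp
  then have "2 * (r * \<bar>a u k\<bar> * norm (w u k)) \<le> energy u k"
    unfolding energy_eq by (simp add: power2_diff)
  from mult_left_mono[OF this K_nonneg] a_part w_part show ?thesis
    by (simp add: algebra_simps)
qed

lemma energy_le_exp:
  assumes "0 \<le> t" "k < m"
  shows "energy t k \<le> energy 0 k * exp (2 * K * t)"
  using energy_has_derivative[OF _ assms(2)] energy_derivative_le
  by (rule le_exp_of_derivative_le[OF assms(1)])

definition init_radius :: "nat \<Rightarrow> real" where
  "init_radius k = r * \<bar>a 0 k\<bar> + norm (w 0 k)"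

lemma weights_le_init_radius:
  assumes "0 \<le> u" "2 * K * u \<le> 1" "k < m"
  shows "r * \<bar>a u k\<bar> \<le> 2 * init_radius k" and "norm (w u k) \<le> 2 * init_radius k"
proof -
  have R_nonneg: "0 \<le> init_radius k"
    unfolding init_radius_def using r_pos by simp
  have "exp (2 * K * u) \<le> exp 1" using assms(2) by simp
  also have "\<dots> \<le> 4" using exp_le by simp
  finally have exp_le_4: "exp (2 * K * u) \<le> 4" .
  have energy_0: "energy 0 k \<le> (init_radius k)^2"
    unfolding energy_eq init_radius_def using r_pos by (simp add: power2_sum)
  have "energy u k \<le> energy 0 k * exp (2 * K * u)"
    by (rule energy_le_exp[OF assms(1,3)])
  also have "\<dots> \<le> (init_radius k)^2 * 4"
    by (rule mult_mono[OF energy_0 exp_le_4]) auto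
  finally have energy_bound: "energy u k \<le> (2 * init_radius k)^2"
    by (simp add: power_mult_distrib)
  have "(r * \<bar>a u k\<bar>)^2 \<le> (2 * init_radius k)^2"
    using energy_bound zero_le_power2[of "norm (w u k)"] unfolding energy_eq by linarith
  then show "r * \<bar>a u k\<bar> \<le> 2 * init_radius k"
    by (rule power2_le_imp_le) (simp add: R_nonneg)
  have "(norm (w u k))^2 \<le> (2 * init_radius k)^2"
    using energy_bound zero_le_power2[of "r * \<bar>a u k\<bar>"] unfolding energy_eq by linarith
  then show "norm (w u k) \<le> 2 * init_radius k"
    by (rule power2_le_imp_le) (simp add: R_nonneg)
qed

lemma weights_drift_le:
  assumes "0 \<le> u" "2 * K * u \<le> 1" "k < m"
  shows "\<bar>a u k - a 0 k\<bar> \<le> u * (2 * K * init_radius k / r)"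
    and "norm (w u k - w 0 k) \<le> u * (2 * K * init_radius k)"
proof -
  have small: "0 \<le> v \<and> 2 * K * v \<le> 1" if "v \<in> {0..u}" for v
    using that assms(2) mult_left_mono[of v u "2 * K"] K_nonneg by auto
  have "norm (a u k - a 0 k) \<le> (2 * K * init_radius k / r) * (u - 0)"
  proof (rule norm_diff_le_of_vector_derivative_bound[of 0 u "\<lambda>s. a s k" "\<lambda>s. a_dot s k"])
    fix v assume v: "v \<in> {0..u}"
    have "((\<lambda>s. a s k) has_real_derivative a_dot v k) (at v within {0..})"
      using a_has_derivative[OF assms(3)] small[OF v] by blast
    then show "((\<lambda>s. a s k) has_vector_derivative a_dot v k) (at v within {0..u})"
      using v by (auto simp: has_real_derivative_iff_has_vector_derivative
          intro: has_vector_derivative_within_subset)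
    have "\<bar>a_dot v k\<bar> \<le> K * norm (w v k) / r" using abs_a_dot_le small[OF v] by auto
    also have "\<dots> \<le> K * (2 * init_radius k) / r"
      using weights_le_init_radius(2)[of v k] small[OF v] assms(3) r_pos K_nonneg
      by (intro divide_right_mono mult_left_mono) auto
    finally show "norm (a_dot v k) \<le> 2 * K * init_radius k / r" by (simp add: mult_ac)
  qed (use assms in auto)
  then show "\<bar>a u k - a 0 k\<bar> \<le> u * (2 * K * init_radius k / r)" by (simp add: mult_ac)
  have "norm (w u k - w 0 k) \<le> (2 * K * init_radius k) * (u - 0)"
  proof (rule norm_diff_le_of_vector_derivative_bound[of 0 u "\<lambda>s. w s k" "\<lambda>s. w_dot s k"])
    fix v assume v: "v \<in> {0..u}"
    have "((\<lambda>s. w s k) has_vector_derivative w_dot v k) (at v within {0..})"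
      using w_has_derivative[OF assms(3)] small[OF v] by blast
    then show "((\<lambda>s. w s k) has_vector_derivative w_dot v k) (at v within {0..u})"
      using v by (auto intro: has_vector_derivative_within_subset)
    have "norm (w_dot v k) \<le> K * (r * \<bar>a v k\<bar>)" using norm_w_dot_le small[OF v] by (simp add: mult_ac)
    also have "\<dots> \<le> K * (2 * init_radius k)"
      using weights_le_init_radius(1)[of v k] small[OF v] assms(3) K_nonneg by (intro mult_left_mono) auto
    finally show "norm (w_dot v k) \<le> 2 * K * init_radius k" by simp
  qed (use assms in auto)
  then show "norm (w u k - w 0 k) \<le> u * (2 * K * init_radius k)" by (simp add: mult_ac)
qed

lemma weights_on_interval:
  assumes init: "\<And>k. k < m \<Longrightarrow> \<bar>a 0 k\<bar> \<le> Q \<and> norm (w 0 k) \<le> Q"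
    and "1 \<le> r" "K \<le> L" "2 * L * t \<le> 1" "u \<in> {0..t}" "k < m"
  shows "\<bar>a u k\<bar> \<le> 4 * Q" and "\<bar>a u k - a 0 k\<bar> \<le> 4 * L * t * Q"
    and "norm (w u k) \<le> Q * (1 + 4 * L * r * t)"
proof -
  have Q: "\<bar>a 0 k\<bar> \<le> Q" "norm (w 0 k) \<le> Q" using init[OF assms(6)] by auto
  then have Q_nonneg: "0 \<le> Q" by (meson abs_ge_zero order_trans)
  have R: "init_radius k \<le> 2 * r * Q"
    unfolding init_radius_def using Q mult_left_mono[OF Q(1), of r] mult_right_mono[OF assms(2) Q_nonneg] r_pos
    by linarith
  have R_nonneg: "0 \<le> init_radius k" unfolding init_radius_def using r_pos by simp
  have u: "0 \<le> u" "u \<le> t" using assms(5) by auto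
  have Ku: "2 * (K * u) \<le> 2 * (L * t)" using K_nonneg u assms(3) by (simp add: mult_mono)
  then have small: "2 * K * u \<le> 1" using assms(4) by linarith
  have Ku_nonneg: "0 \<le> 2 * (K * u)" using K_nonneg u by simp
  with Ku have Lt_nonneg: "0 \<le> 2 * (L * t)" by linarith
  have "r * \<bar>a u k\<bar> \<le> r * (4 * Q)"
    using weights_le_init_radius(1)[OF u(1) small assms(6)] R by linarith
  then show "\<bar>a u k\<bar> \<le> 4 * Q" using r_pos by simp
  have "\<bar>a u k - a 0 k\<bar> \<le> 2 * (K * u) * init_radius k / r"
    using weights_drift_le(1)[OF u(1) small assms(6)] by (simp add: mult_ac)
  also have "\<dots> \<le> 2 * (L * t) * (2 * r * Q) / r"
    using r_pos by (intro divide_right_mono mult_mono[OF Ku R _ R_nonneg]) (use Ku_nonneg Lt_nonneg in auto)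
  finally show "\<bar>a u k - a 0 k\<bar> \<le> 4 * L * t * Q" using r_pos by simp
  have "norm (w u k - w 0 k) \<le> 2 * (K * u) * init_radius k"
    using weights_drift_le(2)[OF u(1) small assms(6)] by (simp add: mult_ac)
  also have "\<dots> \<le> 2 * (L * t) * (2 * r * Q)"
    by (rule mult_mono[OF Ku R]) (use Ku_nonneg Lt_nonneg R_nonneg in auto)
  finally have "norm (w u k - w 0 k) \<le> 4 * L * r * t * Q" by (simp add: mult_ac)
  then show "norm (w u k) \<le> Q * (1 + 4 * L * r * t)"
    using Q(2) norm_triangle_sub[of "w u k" "w 0 k"] by (simp add: algebra_simps)
qed

text \<open>Since \<open>z\<close> is the mean of the \<open>y\<^sub>i x\<^sub>i\<close>, the velocity of \<open>w\<^sub>k\<close> differs from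
  \<open>r a\<^sub>k(0) z\<close> by a mean of terms bounded by \<open>abs_linearization_term_le\<close>, which are small
  as long as the outputs, the drift of \<open>a\<^sub>k\<close> and \<open>\<sigma>' - 1\<close> are small.\<close>

lemma norm_w_linearization_le:
  assumes "0 \<le> t" "k < m"
    and drift: "\<And>u. u \<in> {0..t} \<Longrightarrow> \<bar>a u k - a 0 k\<bar> \<le> Da"
    and a_bound: "\<And>u. u \<in> {0..t} \<Longrightarrow> \<bar>a u k\<bar> \<le> Ab"
    and w_bound: "\<And>u. u \<in> {0..t} \<Longrightarrow> \<epsilon> * norm (w u k) \<le> Ew"
    and out_bound: "\<And>u i. u \<in> {0..t} \<Longrightarrow> i < n \<Longrightarrow> \<bar>net_out m \<nu> \<epsilon> \<sigma> (a u) (w u) (x i)\<bar> \<le> F"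
  shows "norm (w t k - w 0 k - (t * r * a 0 k) *\<^sub>R z)
     \<le> t * r * X * (c * (CL * Da + \<bar>a 0 k\<bar> * (CL * Ew * X)) + F * Ab * CL)"
proof -
  let ?C = "c * (CL * Da + \<bar>a 0 k\<bar> * (CL * Ew * X)) + F * Ab * CL"
  let ?term = "\<lambda>u i. - (residual u i * a u k * \<sigma>' (\<epsilon> * (w u k \<bullet> x i))) - y i * a 0 k"
  have "norm ((w t k - (t * r * a 0 k) *\<^sub>R z) - (w 0 k - (0 * r * a 0 k) *\<^sub>R z)) \<le> (r * (?C * X)) * (t - 0)"
  proof (rule norm_diff_le_of_vector_derivative_bound[of 0 t _ "\<lambda>s. w_dot s k - (r * a 0 k) *\<^sub>R z"])
    fix u assume u: "u \<in> {0..t}"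
    have "((\<lambda>s. w s k) has_vector_derivative w_dot u k) (at u within {0..})"
      using w_has_derivative assms(2) u by auto
    then show "((\<lambda>s. w s k - (s * r * a 0 k) *\<^sub>R z) has_vector_derivative w_dot u k - (r * a 0 k) *\<^sub>R z)
        (at u within {0..t})"
      by (auto intro!: derivative_eq_intros intro: has_vector_derivative_within_subset)
    have eq: "w_dot u k - (r * a 0 k) *\<^sub>R z = (r * (1 / real n)) *\<^sub>R (\<Sum>i<n. ?term u i *\<^sub>R x i)"
      unfolding w_dot_def z_def r_def
      by (simp add: scaleR_left_diff_distrib sum_subtractf sum_negf scaleR_diff_right scaleR_sum_right mult_ac)
    have "norm (\<Sum>i<n. ?term u i *\<^sub>R x i) \<le> (\<Sum>i<n. ?C * norm (x i))"
    proof (intro order_trans[OF norm_sum] sum_mono)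
      fix i assume i: "i \<in> {..<n}"
      have "0 \<le> Ew" using w_bound[OF u] \<epsilon>_pos by (smt (verit) mult_nonneg_nonneg norm_ge_zero)
      then have "CL * (\<epsilon> * norm (w u k) * norm (x i)) \<le> CL * (Ew * X)"
        using w_bound[OF u] norm_x_le_X[of i] i CL_ge_1 by (intro mult_left_mono mult_mono) auto
      with abs_\<sigma>'_inner_minus_1_le[of \<epsilon> "w u k" i] \<epsilon>_pos
      have "\<bar>\<sigma>' (\<epsilon> * (w u k \<bullet> x i)) - 1\<bar> \<le> CL * Ew * X" by (simp add: mult.assoc)
      then have "\<bar>?term u i\<bar> \<le> ?C"
        unfolding residual_def using i
        by (intro abs_linearization_term_le drift[OF u] a_bound[OF u] \<sigma>'_bound out_bound[OF u] y_bound) auto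
      from mult_right_mono[OF this norm_ge_zero[of "x i"]]
      show "norm (?term u i *\<^sub>R x i) \<le> ?C * norm (x i)"
        by simp
    qed
    also have "\<dots> = ?C * X" unfolding X_def by (simp add: sum_distrib_left)
    finally have "(1 / real n) * norm (\<Sum>i<n. ?term u i *\<^sub>R x i) \<le> 1 * (?C * X)"
      using n_pos by (intro mult_mono) auto
    from mult_left_mono[OF this, of r]
    show "norm (w_dot u k - (r * a 0 k) *\<^sub>R z) \<le> r * (?C * X)"
      unfolding eq using r_pos by (simp add: abs_mult mult.assoc)
  qed (use assms in auto)
  then show ?thesis by (simp add: algebra_simps)
qed

lemma K_le_K_max:
  assumes init: "\<And>k. k < m \<Longrightarrow> \<bar>a 0 k\<bar> \<le> Q \<and> norm (w 0 k) \<le> Q"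
    and init_small: "real m * \<nu> * \<epsilon> * CL * X * Q^2 \<le> 1"
  shows "K \<le> K_max"
proof -
  have "(residual 0 i)^2 \<le> (1 + c)^2" if "i < n" for i
  proof -
    have "\<bar>net_out m \<nu> \<epsilon> \<sigma> (a 0) (w 0) (x i)\<bar> \<le> real m * \<nu> * Q * CL * (\<epsilon> * Q) * X"
      using abs_net_out_le[OF \<nu>_pos \<epsilon>_pos that init] .
    also have "\<dots> \<le> 1" using init_small by (simp add: power2_eq_square mult_ac)
    finally have "\<bar>residual 0 i\<bar> \<le> 1 + c"
      unfolding residual_def using y_bound[OF that] by linarith
    then show ?thesis by (metis abs_ge_zero power_mono power2_abs)
  qed
  then have "loss 0 \<le> real n * (1 + c)^2"
    unfolding loss_def using sum_mono[of "{..<n}" "\<lambda>i. (residual 0 i)^2" "\<lambda>_. (1 + c)^2"] by simp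
  then have "sqrt (loss 0) \<le> sqrt (real n * (1 + c)^2)"
    by (rule real_sqrt_le_mono)
  also have "\<dots> = sqrt (real n) * (1 + c)"
    using c_nonneg by (simp add: real_sqrt_mult)
  finally show ?thesis
    unfolding K_def K_max_def using CL_ge_1 X_nonneg by (intro mult_right_mono) auto
qed

lemma flow_estimates:
  fixes Q lam \<gamma>' \<beta> :: real
  defines "B \<equiv> 4 * Q * (1 + K_max * lam)"
  assumes "0 < m"
    and init: "\<And>k. k < m \<Longrightarrow> \<bar>a 0 k\<bar> \<le> Q \<and> norm (w 0 k) \<le> Q"
    and init_small: "real m * \<nu> * \<epsilon> * CL * X * Q^2 \<le> 1"
    and "1 \<le> r" "0 < lam" "2 * K_max * lam \<le> r"
    and psi_small: "real m * \<nu> * \<epsilon> * B^3 + \<epsilon> * B^2 \<le> real m powr (- (- \<gamma>' / \<beta>))"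
  shows "ereal (lam / r) \<le> T_eff m \<nu> \<epsilon> \<gamma>' \<beta> a w"
    and "k < m \<Longrightarrow> norm (w (lam / r) k - w 0 k - (lam * a 0 k) *\<^sub>R z)
           \<le> lam * (lin_error_coeff * (lam / r * B + \<epsilon> * B^2 + real m * \<nu> * \<epsilon> * B^3))"
proof -
  define t where "t = lam / r"
  have Q_nonneg: "0 \<le> Q" using init[OF \<open>0 < m\<close>] by (meson abs_ge_zero order_trans)
  have t_nonneg: "0 \<le> t" and tr: "t * r = lam"
    unfolding t_def using r_pos \<open>0 < lam\<close> by auto
  have small: "2 * K_max * t \<le> 1"
    unfolding t_def using r_pos assms(6-7) by (simp add: field_simps)
  have K_le: "K \<le> K_max"
    by (rule K_le_K_max) (use init init_small in auto)
  have weights: "\<bar>a u k\<bar> \<le> 4 * Q" "\<bar>a u k - a 0 k\<bar> \<le> 4 * K_max * t * Q"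
    "norm (w u k) \<le> Q * (1 + 4 * K_max * r * t)" if "u \<in> {0..t}" "k < m" for u k
    using weights_on_interval[of Q K_max t u k] init \<open>1 \<le> r\<close> K_le small that by blast+
  have Q_le_B: "Q \<le> B" and four_Q_le_B: "4 * Q \<le> B" and w_le_B: "Q * (1 + 4 * K_max * r * t) \<le> B"
    unfolding B_def tr[symmetric] using Q_nonneg K_max_nonneg r_pos t_nonneg
    by (simp_all add: algebra_simps mult_nonneg_nonneg)
  have bounded: "\<bar>a u k\<bar> \<le> B \<and> norm (w u k) \<le> B" if "u \<in> {0..t}" "k < m" for u k
    using weights(1,3)[OF that] four_Q_le_B w_le_B by linarith
  show "ereal (lam / r) \<le> T_eff m \<nu> \<epsilon> \<gamma>' \<beta> a w"
    unfolding t_def[symmetric] using \<open>0 < m\<close> \<nu>_pos \<epsilon>_pos bounded psi_small by (intro T_eff_ge_of_bounded) auto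
  assume k: "k < m"
  have out: "\<bar>net_out m \<nu> \<epsilon> \<sigma> (a u) (w u) (x i)\<bar> \<le> real m * \<nu> * (4 * Q) * CL * (\<epsilon> * B) * X"
    if "u \<in> {0..t}" "i < n" for u i
    using weights(1)[OF that(1)] bounded[OF that(1)] by (intro abs_net_out_le \<nu>_pos \<epsilon>_pos that(2)) auto
  have "norm (w t k - w 0 k - (lam * a 0 k) *\<^sub>R z)
      \<le> lam * X * (c * (CL * (4 * K_max * t * Q) + \<bar>a 0 k\<bar> * (CL * (\<epsilon> * B) * X))
          + real m * \<nu> * (4 * Q) * CL * (\<epsilon> * B) * X * (4 * Q) * CL)"
    unfolding tr[symmetric]
  proof (rule norm_w_linearization_le[OF t_nonneg k])
    fix u assume u: "u \<in> {0..t}"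
    show "\<bar>a u k - a 0 k\<bar> \<le> 4 * K_max * t * Q" "\<bar>a u k\<bar> \<le> 4 * Q"
      using weights(1,2)[OF u k] by auto
    show "\<epsilon> * norm (w u k) \<le> \<epsilon> * B"
      using bounded[OF u k] \<epsilon>_pos by simp
    show "\<bar>net_out m \<nu> \<epsilon> \<sigma> (a u) (w u) (x i)\<bar> \<le> real m * \<nu> * (4 * Q) * CL * (\<epsilon> * B) * X"
      if "i < n" for i
      using out[OF u that] .
  qed
  also have "\<dots> \<le> lam * (lin_error_coeff * (t * B + \<epsilon> * B^2 + real m * \<nu> * \<epsilon> * B^3))"
  proof -
    have "\<bar>a 0 k\<bar> \<le> Q" using init[OF k] by simp
    from mult_left_mono[OF linearization_error_le[OF Q_nonneg Q_le_B this t_nonneg \<epsilon>_pos \<nu>_pos], of lam]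
    show ?thesis using \<open>0 < lam\<close> by (simp add: mult.assoc)
  qed
  finally show "norm (w (lam / r) k - w 0 k - (lam * a 0 k) *\<^sub>R z)
      \<le> lam * (lin_error_coeff * (lam / r * B + \<epsilon> * B^2 + real m * \<nu> * \<epsilon> * B^3))"
    by (simp only: t_def)
qed

end

section \<open>Geometry of the weight vectors\<close>

lemma theta_w_norm_eq_L2_set: "theta_w_norm m W = L2_set (\<lambda>k. norm (W k)) {..<m}"
  unfolding theta_w_norm_def L2_set_def by simp

lemma theta_wz_norm_eq_L2_set: "theta_wz_norm m u W = L2_set (\<lambda>k. W k \<bullet> u) {..<m}"
  unfolding theta_wz_norm_def L2_set_def by simp

lemma L2_set_abs: "L2_set (\<lambda>k. \<bar>f k\<bar>) A = L2_set f A"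
  unfolding L2_set_def by simp

lemma L2_set_norm_diff_le:
  fixes U V :: "'i \<Rightarrow> 'a::real_normed_vector"
  shows "L2_set (\<lambda>k. norm (U k)) A - L2_set (\<lambda>k. norm (V k - U k)) A \<le> L2_set (\<lambda>k. norm (V k)) A"
proof -
  have "L2_set (\<lambda>k. norm (U k)) A \<le> L2_set (\<lambda>k. norm (V k) + norm (V k - U k)) A"
    by (intro L2_set_mono) (auto simp: norm_triangle_sub norm_minus_commute)
  also have "\<dots> \<le> L2_set (\<lambda>k. norm (V k)) A + L2_set (\<lambda>k. norm (V k - U k)) A"
    by (rule L2_set_triangle_ineq)
  finally show ?thesis by simp
qed

lemma norm_minus_projection:
  fixes u v :: "'a::real_inner"
  assumes "norm u = 1"
  shows "(norm v)^2 = (v \<bullet> u)^2 + (norm (v - (v \<bullet> u) *\<^sub>R u))^2"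
proof -
  have "u \<bullet> u = 1" using assms by (simp add: power2_norm_eq_inner[symmetric])
  then show ?thesis
    unfolding power2_norm_eq_inner
    by (simp add: inner_diff_left inner_diff_right power2_eq_square algebra_simps inner_commute)
qed

lemma norm_minus_projection_le:
  fixes u v :: "'a::real_inner"
  assumes "norm u = 1"
  shows "norm (v - (v \<bullet> u) *\<^sub>R u) \<le> norm (v - \<mu> *\<^sub>R u)"
proof (rule power2_le_imp_le)
  have "u \<bullet> u = 1" using assms by (simp add: power2_norm_eq_inner[symmetric])
  then have "(norm (v - \<mu> *\<^sub>R u))^2 = (norm (v - (v \<bullet> u) *\<^sub>R u))^2 + (v \<bullet> u - \<mu>)^2"
    unfolding power2_norm_eq_inner
    by (simp add: inner_diff_left inner_diff_right power2_eq_square algebra_simps inner_commute)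
  then show "(norm (v - (v \<bullet> u) *\<^sub>R u))^2 \<le> (norm (v - \<mu> *\<^sub>R u))^2" by simp
qed simp

lemma theta_wz_ratio_le_1:
  assumes "norm u = 1"
  shows "theta_wz_norm m u W / theta_w_norm m W \<le> 1"
proof -
  have "theta_wz_norm m u W = L2_set (\<lambda>k. \<bar>W k \<bullet> u\<bar>) {..<m}"
    by (simp add: theta_wz_norm_eq_L2_set L2_set_abs)
  also have "\<dots> \<le> theta_w_norm m W"
    unfolding theta_w_norm_eq_L2_set
    using assms Cauchy_Schwarz_ineq2[of "W _" u] by (intro L2_set_mono) auto
  moreover have "0 \<le> theta_w_norm m W" by (simp add: theta_w_norm_eq_L2_set)
  ultimately show ?thesis
    by (cases "theta_w_norm m W = 0") (auto simp: divide_le_eq_1)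
qed

lemma one_minus_ratio_le_of_pythagoras:
  fixes N Z P S L :: real
  assumes "0 \<le> N" "0 \<le> P" "N^2 = Z^2 + P^2" "P \<le> S" "L - S \<le> Z" "2 * S < L"
  shows "1 - S / (L - S) \<le> Z / N"
proof -
  have S_nonneg: "0 \<le> S" and Z_pos: "0 < Z" using assms(2,4-6) by linarith+
  have "0 \<le> 2 * Z * P" using Z_pos assms(2) by simp
  then have "N^2 \<le> (Z + P)^2" using assms(3) unfolding power2_sum by linarith
  then have N_le: "N \<le> Z + P" by (rule power2_le_imp_le) (use Z_pos assms(2) in simp)
  have "Z^2 \<le> N^2" using assms(3) zero_le_power2[of P] by linarith
  then have "Z \<le> N" by (rule power2_le_imp_le) (use assms(1) in simp)
  with Z_pos have N_pos: "0 < N" by linarith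
  have "1 - S / (L - S) \<le> 1 - P / Z"
  proof -
    have "P / Z \<le> S / Z" using assms(4) Z_pos by (intro divide_right_mono) auto
    also have "\<dots> \<le> S / (L - S)" using assms(5,6) S_nonneg Z_pos by (intro divide_left_mono) auto
    finally show ?thesis by simp
  qed
  also have "\<dots> \<le> Z / (Z + P)"
  proof -
    have "(Z - P) * (Z + P) \<le> Z * Z" by (simp add: algebra_simps)
    then have "(Z - P) / Z \<le> Z / (Z + P)"
      using Z_pos assms(2) by (simp add: frac_le_eq divide_nonpos_pos)
    then show ?thesis using Z_pos by (simp add: diff_divide_distrib)
  qed
  also have "\<dots> \<le> Z / N"
    using N_le N_pos Z_pos by (intro divide_left_mono) auto
  finally show ?thesis .
qed

text \<open>If the neurons are within \<open>S\<close> (in \<open>\<ell>\<^sup>2\<close>) of multiples \<open>\<mu>\<^sub>k u\<close> of a unit vector, the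
  component along \<open>u\<close> has size at least \<open>|\<mu>| - S\<close> and the orthogonal part at most \<open>S\<close>.\<close>

lemma theta_wz_ratio_ge:
  fixes W :: "nat \<Rightarrow> real^'d"
  assumes u: "norm u = 1"
    and close: "L2_set (\<lambda>k. norm (W k - \<mu> k *\<^sub>R u)) {..<m} \<le> S"
    and gap: "2 * S < L2_set \<mu> {..<m}"
  shows "1 - S / (L2_set \<mu> {..<m} - S) \<le> theta_wz_norm m u W / theta_w_norm m W"
proof (rule one_minus_ratio_le_of_pythagoras[OF _ L2_set_nonneg _ _ _ gap])
  show "0 \<le> theta_w_norm m W" by (simp add: theta_w_norm_eq_L2_set)
  have "u \<bullet> u = 1" using u by (simp add: power2_norm_eq_inner[symmetric])
  then have "\<bar>W k \<bullet> u - \<mu> k\<bar> \<le> norm (W k - \<mu> k *\<^sub>R u)" for k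
    using Cauchy_Schwarz_ineq2[of "W k - \<mu> k *\<^sub>R u" u] u by (simp add: inner_diff_left)
  then have "L2_set (\<lambda>k. norm (W k \<bullet> u - \<mu> k)) {..<m} \<le> L2_set (\<lambda>k. norm (W k - \<mu> k *\<^sub>R u)) {..<m}"
    by (intro L2_set_mono) auto
  with close L2_set_norm_diff_le[of \<mu> "{..<m}" "\<lambda>k. W k \<bullet> u"]
  show "L2_set \<mu> {..<m} - S \<le> theta_wz_norm m u W"
    unfolding theta_wz_norm_eq_L2_set by (simp add: L2_set_abs)
  have "L2_set (\<lambda>k. norm (W k - (W k \<bullet> u) *\<^sub>R u)) {..<m} \<le> L2_set (\<lambda>k. norm (W k - \<mu> k *\<^sub>R u)) {..<m}"
    by (intro L2_set_mono norm_minus_projection_le[OF u]) auto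
  with close show "L2_set (\<lambda>k. norm (W k - (W k \<bullet> u) *\<^sub>R u)) {..<m} \<le> S" by linarith
  have L2_sq: "(L2_set f {..<m})^2 = (\<Sum>k<m. (f k)^2)" for f :: "nat \<Rightarrow> real"
    unfolding L2_set_def by (simp add: sum_nonneg)
  have "(\<Sum>k<m. (norm (W k))^2) = (\<Sum>k<m. (W k \<bullet> u)^2) + (\<Sum>k<m. (norm (W k - (W k \<bullet> u) *\<^sub>R u))^2)"
    by (subst sum.distrib[symmetric]) (rule sum.cong[OF refl], rule norm_minus_projection[OF u])
  then show "(theta_w_norm m W)^2
      = (theta_wz_norm m u W)^2 + (L2_set (\<lambda>k. norm (W k - (W k \<bullet> u) *\<^sub>R u)) {..<m})^2"
    unfolding theta_w_norm_eq_L2_set theta_wz_norm_eq_L2_set L2_sq .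
qed

lemma L2_set_norm_scaleR:
  assumes "0 \<le> c"
  shows "L2_set (\<lambda>k. norm ((c * \<alpha> k) *\<^sub>R v)) A = c * norm v * L2_set \<alpha> A"
proof -
  have "L2_set (\<lambda>k. norm ((c * \<alpha> k) *\<^sub>R v)) A = L2_set (\<lambda>k. (c * norm v) * \<bar>\<alpha> k\<bar>) A"
    using assms by (intro L2_set_cong) (auto simp: abs_mult)
  also have "\<dots> = c * norm v * L2_set \<alpha> A"
    using L2_set_right_distrib[of "c * norm v" "\<lambda>k. \<bar>\<alpha> k\<bar>" A] assms by (simp add: L2_set_abs)
  finally show ?thesis .
qed

lemma theta_w_drift_ratio_ge:
  fixes W0 Wt :: "nat \<Rightarrow> real^'d" and v :: "real^'d"
  assumes "0 < lam"
    and init: "\<And>k. k < m \<Longrightarrow> norm (W0 k) \<le> Q"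
    and spread: "sqrt (real m) * s \<le> L2_set \<alpha> {..<m}"
    and W0_pos: "0 < theta_w_norm m W0"
    and lin: "\<And>k. k < m \<Longrightarrow> norm (Wt k - W0 k - (lam * \<alpha> k) *\<^sub>R v) \<le> lam * D"
    and "D \<le> norm v * s"
  shows "lam / Q * (norm v * s - D) \<le> theta_w_norm m (\<lambda>k. Wt k - W0 k) / theta_w_norm m W0"
proof -
  have "0 < m"
    using W0_pos by (cases m) (auto simp: theta_w_norm_eq_L2_set)
  then have sqrt_m: "0 < sqrt (real m)" by simp
  have "0 \<le> Q" using init[OF \<open>0 < m\<close>] norm_ge_zero[of "W0 0"] by linarith
  have "theta_w_norm m W0 \<le> L2_set (\<lambda>k. Q) {..<m}"
    unfolding theta_w_norm_eq_L2_set using init by (intro L2_set_mono) auto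
  then have W0_le: "theta_w_norm m W0 \<le> sqrt (real m) * Q"
    using \<open>0 \<le> Q\<close> by (simp add: L2_set_constant)
  have lam_D: "0 \<le> lam * D"
    using lin[OF \<open>0 < m\<close>] norm_ge_zero[of "Wt 0 - W0 0 - (lam * \<alpha> 0) *\<^sub>R v"] by linarith
  have "L2_set (\<lambda>k. norm (Wt k - W0 k - (lam * \<alpha> k) *\<^sub>R v)) {..<m} \<le> L2_set (\<lambda>k. lam * D) {..<m}"
    using lin by (intro L2_set_mono) auto
  then have "L2_set (\<lambda>k. norm (Wt k - W0 k - (lam * \<alpha> k) *\<^sub>R v)) {..<m} \<le> sqrt (real m) * (lam * D)"
    using lam_D by (simp add: L2_set_constant)
  then have "lam * norm v * L2_set \<alpha> {..<m} - sqrt (real m) * (lam * D) \<le> theta_w_norm m (\<lambda>k. Wt k - W0 k)"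
    using L2_set_norm_diff_le[where U = "\<lambda>k. (lam * \<alpha> k) *\<^sub>R v" and V = "\<lambda>k. Wt k - W0 k" and A = "{..<m}"]
    unfolding theta_w_norm_eq_L2_set L2_set_norm_scaleR[OF less_imp_le[OF \<open>0 < lam\<close>]] by linarith
  moreover have "lam * norm v * (sqrt (real m) * s) \<le> lam * norm v * L2_set \<alpha> {..<m}"
    using \<open>0 < lam\<close> by (intro mult_left_mono spread) auto
  ultimately have num: "sqrt (real m) * (lam * (norm v * s - D)) \<le> theta_w_norm m (\<lambda>k. Wt k - W0 k)"
    by (simp add: algebra_simps)
  have num_nonneg: "0 \<le> sqrt (real m) * (lam * (norm v * s - D))"
    using \<open>D \<le> norm v * s\<close> \<open>0 < lam\<close> by simp
  have "lam / Q * (norm v * s - D) = sqrt (real m) * (lam * (norm v * s - D)) / (sqrt (real m) * Q)"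
    using sqrt_m by simp
  also have "\<dots> \<le> sqrt (real m) * (lam * (norm v * s - D)) / theta_w_norm m W0"
    using num_nonneg W0_pos W0_le by (intro divide_left_mono) auto
  also have "\<dots> \<le> theta_w_norm m (\<lambda>k. Wt k - W0 k) / theta_w_norm m W0"
    using num W0_pos by (intro divide_right_mono) auto
  finally show ?thesis .
qed

lemma theta_wz_ratio_ge_of_linearization:
  fixes W0 Wt :: "nat \<Rightarrow> real^'d" and v :: "real^'d"
  assumes "0 < m" "0 < lam"
    and init: "\<And>k. k < m \<Longrightarrow> norm (W0 k) \<le> Q"
    and spread: "sqrt (real m) * s \<le> L2_set \<alpha> {..<m}"
    and lin: "\<And>k. k < m \<Longrightarrow> norm (Wt k - W0 k - (lam * \<alpha> k) *\<^sub>R v) \<le> lam * D"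
    and gap: "2 * (Q / lam + D) < norm v * s"
  shows "1 - (Q / lam + D) / (norm v * s - (Q / lam + D))
           \<le> theta_wz_norm m ((1 / norm v) *\<^sub>R v) Wt / theta_w_norm m Wt"
proof -
  define \<zeta> where "\<zeta> = norm v * s"
  define \<rho> where "\<rho> = Q / lam + D"
  define c where "c = sqrt (real m) * lam"
  have c_pos: "0 < c" unfolding c_def using assms(1,2) by simp
  have lam_\<rho>: "Q + lam * D = lam * \<rho>" unfolding \<rho>_def using \<open>0 < lam\<close> by (simp add: field_simps)
  have "0 \<le> Q + lam * D"
    using init[OF \<open>0 < m\<close>] lin[OF \<open>0 < m\<close>] norm_ge_zero[of "W0 0"]
      norm_ge_zero[of "Wt 0 - W0 0 - (lam * \<alpha> 0) *\<^sub>R v"] by linarith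
  then have lam_\<rho>_nonneg: "0 \<le> lam * \<rho>" unfolding lam_\<rho> .
  then have cS: "0 \<le> c * \<rho>"
    unfolding c_def using mult_nonneg_nonneg[of "sqrt (real m)" "lam * \<rho>"] by (simp add: mult.assoc)
  have gap': "2 * \<rho> < \<zeta>" using gap unfolding \<zeta>_def \<rho>_def .
  then have "v \<noteq> 0" using cS c_pos unfolding \<zeta>_def by (auto simp: zero_le_mult_iff)
  define \<mu> where "\<mu> k = lam * norm v * \<alpha> k" for k
  have L2_\<mu>: "c * \<zeta> \<le> L2_set \<mu> {..<m}"
  proof -
    have "lam * norm v * (sqrt (real m) * s) \<le> lam * norm v * L2_set \<alpha> {..<m}"
      using \<open>0 < lam\<close> by (intro mult_left_mono spread) auto
    then show ?thesis
      unfolding \<mu>_def c_def \<zeta>_def using \<open>0 < lam\<close> by (simp add: L2_set_right_distrib[symmetric] mult_ac)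
  qed
  have close: "L2_set (\<lambda>k. norm (Wt k - \<mu> k *\<^sub>R ((1 / norm v) *\<^sub>R v))) {..<m} \<le> c * \<rho>"
  proof -
    have "norm (Wt k - \<mu> k *\<^sub>R ((1 / norm v) *\<^sub>R v)) \<le> lam * \<rho>" if "k < m" for k
    proof -
      have "Wt k - \<mu> k *\<^sub>R ((1 / norm v) *\<^sub>R v) = W0 k + (Wt k - W0 k - (lam * \<alpha> k) *\<^sub>R v)"
        unfolding \<mu>_def using \<open>v \<noteq> 0\<close> by (simp add: algebra_simps)
      then have "norm (Wt k - \<mu> k *\<^sub>R ((1 / norm v) *\<^sub>R v))
          = norm (W0 k + (Wt k - W0 k - (lam * \<alpha> k) *\<^sub>R v))"
        by (rule arg_cong)
      then show ?thesis
        using norm_triangle_ineq[of "W0 k" "Wt k - W0 k - (lam * \<alpha> k) *\<^sub>R v"] init[OF that] lin[OF that] lam_\<rho>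
        by linarith
    qed
    then have "L2_set (\<lambda>k. norm (Wt k - \<mu> k *\<^sub>R ((1 / norm v) *\<^sub>R v))) {..<m} \<le> L2_set (\<lambda>k. lam * \<rho>) {..<m}"
      by (intro L2_set_mono) auto
    also have "\<dots> = c * \<rho>"
      using lam_\<rho>_nonneg unfolding c_def by (simp add: L2_set_constant mult.assoc)
    finally show ?thesis .
  qed
  have "1 - \<rho> / (\<zeta> - \<rho>) = 1 - (c * \<rho>) / (c * \<zeta> - c * \<rho>)"
    unfolding right_diff_distrib[symmetric] using c_pos by simp
  also have "\<dots> \<le> 1 - (c * \<rho>) / (L2_set \<mu> {..<m} - c * \<rho>)"
  proof (rule diff_left_mono, rule divide_left_mono)
    have "c * (2 * \<rho>) < c * \<zeta>" using mult_strict_left_mono[OF gap' c_pos] .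
    then show "0 < (L2_set \<mu> {..<m} - c * \<rho>) * (c * \<zeta> - c * \<rho>)"
      using L2_\<mu> cS by (intro mult_pos_pos) (simp_all add: algebra_simps)
  qed (use L2_\<mu> cS in auto)
  also have "\<dots> \<le> theta_wz_norm m ((1 / norm v) *\<^sub>R v) Wt / theta_w_norm m Wt"
  proof (rule theta_wz_ratio_ge[OF _ close])
    show "norm ((1 / norm v) *\<^sub>R v) = 1" using \<open>v \<noteq> 0\<close> by simp
    have "c * (2 * \<rho>) < c * \<zeta>" using mult_strict_left_mono[OF gap' c_pos] .
    then show "2 * (c * \<rho>) < L2_set \<mu> {..<m}" using L2_\<mu> by (simp add: algebra_simps)
  qed
  finally show ?thesis unfolding \<zeta>_def \<rho>_def .
qed

section \<open>Scaling exponents\<close>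

lemma powr_tendsto_0_of_exponent:
  assumes e: "(e \<longlongrightarrow> L) sequentially" and "L < 0"
  shows "((\<lambda>m. real m powr e m) \<longlongrightarrow> 0) sequentially"
proof (rule tendsto_sandwich[OF _ _ tendsto_const])
  show "eventually (\<lambda>m. 0 \<le> real m powr e m) sequentially" by simp
  have "eventually (\<lambda>m. e m \<le> L / 2) sequentially"
    using order_tendstoD(2)[OF e, of "L / 2"] \<open>L < 0\<close> by (auto elim: eventually_mono)
  then show "eventually (\<lambda>m. real m powr e m \<le> real m powr (L / 2)) sequentially"
    using eventually_ge_at_top[of 1] by eventually_elim (auto intro: powr_mono)
  show "((\<lambda>m. real m powr (L / 2)) \<longlongrightarrow> 0) sequentially"
    using \<open>L < 0\<close> by (intro tendsto_neg_powr filterlim_real_sequentially) auto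
qed

lemma mult_powr_tendsto_0_of_log_ratio:
  fixes f :: "nat \<Rightarrow> real"
  assumes pos: "\<And>m. 0 < f m"
    and lim: "((\<lambda>m. - ln (f m) / ln (real m)) \<longlongrightarrow> g) sequentially"
    and "r < g"
  shows "((\<lambda>m. f m * real m powr r) \<longlongrightarrow> 0) sequentially"
proof -
  have eq: "eventually (\<lambda>m. real m powr (r - - ln (f m) / ln (real m)) = f m * real m powr r) sequentially"
    using eventually_ge_at_top[of 2]
  proof eventually_elim
    case (elim m)
    then have "0 < ln (real m)" by simp
    then have "real m powr (- (- ln (f m) / ln (real m))) = f m"
      using pos[of m] elim by (simp add: powr_def)
    then show ?case
      using powr_add[of "real m" r "- (- ln (f m) / ln (real m))"] by simp
  qed
  have "((\<lambda>m. real m powr (r - - ln (f m) / ln (real m))) \<longlongrightarrow> 0) sequentially"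
    using \<open>r < g\<close> by (intro powr_tendsto_0_of_exponent[where L = "r - g"] tendsto_intros lim) auto
  then show ?thesis using eq by (rule Lim_transform_eventually)
qed

text \<open>The exponent \<open>-\<gamma>'/\<beta>\<close> of the threshold \<open>m\<^sup>-\<^sup>\<tau>\<close> in \<open>T\<^sub>e\<^sub>f\<^sub>f\<close>, for the paper's choice
  \<open>\<beta> = beta_bar \<gamma> \<gamma>'\<close>.\<close>

definition threshold_exponent :: "real \<Rightarrow> real \<Rightarrow> real" where
  "threshold_exponent \<gamma>1 \<gamma>2 = - (\<gamma>1 - \<gamma>2) / beta_bar (\<gamma>1 + \<gamma>2) (\<gamma>1 - \<gamma>2)"

text \<open>The initial weights are bounded by \<open>m\<^sup>\<kappa>\<close>; \<open>\<kappa>\<close> is chosen so small that every error term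
  of the linearization still vanishes.\<close>

definition growth_exponent :: "real \<Rightarrow> real \<Rightarrow> real" where
  "growth_exponent \<gamma>1 \<gamma>2 =
     min (min (\<gamma>1 + \<gamma>2 - 1 - threshold_exponent \<gamma>1 \<gamma>2) (\<gamma>2 - threshold_exponent \<gamma>1 \<gamma>2)) (\<gamma>2 - \<gamma>1) / 10"

lemma threshold_exponent_bounds:
  assumes "1 < \<gamma>1 + \<gamma>2" "\<gamma>1 - \<gamma>2 < 0"
  shows "0 < threshold_exponent \<gamma>1 \<gamma>2" and "threshold_exponent \<gamma>1 \<gamma>2 < \<gamma>1 + \<gamma>2 - 1"
    and "threshold_exponent \<gamma>1 \<gamma>2 < \<gamma>2"
proof -
  let ?\<beta> = "beta_bar (\<gamma>1 + \<gamma>2) (\<gamma>1 - \<gamma>2)"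
  have \<beta>_ge: "-1024 * (\<gamma>1 - \<gamma>2) / (\<gamma>1 + \<gamma>2 - 1) \<le> ?\<beta>" unfolding beta_bar_def by simp
  have pos: "0 < -1024 * (\<gamma>1 - \<gamma>2) / (\<gamma>1 + \<gamma>2 - 1)" using assms by (simp add: divide_pos_pos)
  with \<beta>_ge have \<beta>_pos: "0 < ?\<beta>" by linarith
  then show "0 < threshold_exponent \<gamma>1 \<gamma>2"
    unfolding threshold_exponent_def using assms by (simp add: divide_pos_pos)
  have "threshold_exponent \<gamma>1 \<gamma>2 \<le> - (\<gamma>1 - \<gamma>2) / (-1024 * (\<gamma>1 - \<gamma>2) / (\<gamma>1 + \<gamma>2 - 1))"
    unfolding threshold_exponent_def using assms \<beta>_pos pos
    by (intro divide_left_mono[OF \<beta>_ge]) auto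
  also have "\<dots> = (\<gamma>1 + \<gamma>2 - 1) / 1024" using assms by (simp add: field_simps)
  finally have "threshold_exponent \<gamma>1 \<gamma>2 \<le> (\<gamma>1 + \<gamma>2 - 1) / 1024" .
  moreover have "(\<gamma>1 + \<gamma>2 - 1) / 1024 < \<gamma>1 + \<gamma>2 - 1" and "(\<gamma>1 + \<gamma>2 - 1) / 1024 < \<gamma>2"
    using assms by (simp_all add: divide_less_eq)
  ultimately show "threshold_exponent \<gamma>1 \<gamma>2 < \<gamma>1 + \<gamma>2 - 1" and "threshold_exponent \<gamma>1 \<gamma>2 < \<gamma>2"
    by linarith+
qed

lemma growth_exponent_bounds:
  assumes "1 < \<gamma>1 + \<gamma>2" "\<gamma>1 - \<gamma>2 < 0"
  defines "\<tau> \<equiv> threshold_exponent \<gamma>1 \<gamma>2" and "\<kappa> \<equiv> growth_exponent \<gamma>1 \<gamma>2"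
  shows "0 < \<kappa>" and "1 + 9 * \<kappa> + \<tau> < \<gamma>1 + \<gamma>2" and "6 * \<kappa> + \<tau> < \<gamma>2" and "5 * \<kappa> < \<gamma>2 - \<gamma>1"
proof -
  have "10 * \<kappa> \<le> \<gamma>1 + \<gamma>2 - 1 - \<tau>" "10 * \<kappa> \<le> \<gamma>2 - \<tau>" "10 * \<kappa> \<le> \<gamma>2 - \<gamma>1"
    "0 < 10 * \<kappa>"
    using threshold_exponent_bounds[OF assms(1,2)] assms(2)
    unfolding \<kappa>_def growth_exponent_def \<tau>_def[symmetric] by auto
  then show "0 < \<kappa>" "1 + 9 * \<kappa> + \<tau> < \<gamma>1 + \<gamma>2" "6 * \<kappa> + \<tau> < \<gamma>2" "5 * \<kappa> < \<gamma>2 - \<gamma>1"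
    by linarith+
qed

section \<open>Gaussian initialization\<close>

text \<open>The properties of a standard Gaussian initialization used by the deterministic argument;
  each of them fails with a probability that is summable in the width \<open>m\<close>.\<close>

definition good_init :: "real \<Rightarrow> nat \<Rightarrow> (nat \<Rightarrow> real) \<Rightarrow> (nat \<Rightarrow> real^'d) \<Rightarrow> bool" where
  "good_init \<kappa> m a0 w0 \<longleftrightarrow>
     (\<forall>k<m. \<bar>a0 k\<bar> \<le> real m powr \<kappa> \<and> (\<forall>j. \<bar>w0 k $ j\<bar> \<le> real m powr \<kappa>))
     \<and> real m / 8 \<le> (\<Sum>k<m. min ((a0 k)^2) 1) \<and> w0 0 \<noteq> 0"

lemma good_init_cong:
  assumes "0 < m" "\<And>k. k < m \<Longrightarrow> a0 k = a0' k" "\<And>k. k < m \<Longrightarrow> w0 k = w0' k"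
  shows "good_init \<kappa> m a0 w0 = good_init \<kappa> m a0' w0'"
proof -
  have "(\<Sum>k<m. min ((a0 k)^2) 1) = (\<Sum>k<m. min ((a0' k)^2) 1)"
    using assms(2) by (intro sum.cong) auto
  then show ?thesis unfolding good_init_def using assms by auto
qed

lemma cube_le_powr_power:
  assumes "0 < m" "3 \<le> 2 * real q * \<kappa>"
  shows "real m ^ 3 \<le> (real m powr \<kappa>)^(2 * q)"
proof -
  have "real m ^ 3 = real m powr 3" using assms(1) by (simp add: powr_realpow)
  also have "\<dots> \<le> real m powr (2 * real q * \<kappa>)" using assms by (intro powr_mono) auto
  also have "\<dots> = (real m powr \<kappa>)^(2 * q)" using assms(1) by (simp add: powr_power mult_ac)
  finally show ?thesis .
qed

context prob_space
begin

lemma std_normal_even_moment: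
  assumes X: "distributed M lborel X (\<lambda>u. ennreal (std_normal_density u))"
  shows "integrable M (\<lambda>\<omega>. X \<omega> ^ (2 * k))"
    and "expectation (\<lambda>\<omega>. X \<omega> ^ (2 * k)) = fact (2 * k) / (2^k * fact k)"
proof -
  have "integrable lborel (\<lambda>u. std_normal_density u * u ^ (2 * k))"
    using std_normal_moment_even[of k] by (rule integrable.intros)
  then show "integrable M (\<lambda>\<omega>. X \<omega> ^ (2 * k))"
    using distributed_integrable[OF X, of "\<lambda>u. u ^ (2 * k)"] by simp
  have "expectation (\<lambda>\<omega>. X \<omega> ^ (2 * k)) = (\<integral>u. std_normal_density u * u ^ (2 * k) \<partial>lborel)"
    using distributed_integral[OF X, of "\<lambda>u. u ^ (2 * k)"] by simp
  then show "expectation (\<lambda>\<omega>. X \<omega> ^ (2 * k)) = fact (2 * k) / (2^k * fact k)"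
    using integral_std_normal_moment_even[of k] by simp
qed

lemma prob_std_normal_tail_le:
  assumes X: "distributed M lborel X (\<lambda>u. ennreal (std_normal_density u))" and "0 < b"
  shows "prob {\<omega>\<in>space M. b < \<bar>X \<omega>\<bar>} \<le> (fact (2 * k) / (2^k * fact k)) / b^(2 * k)"
proof -
  have [measurable]: "X \<in> borel_measurable M" using distributed_measurable[OF X] by simp
  have "prob {\<omega>\<in>space M. b < \<bar>X \<omega>\<bar>} \<le> prob {\<omega>\<in>space M. b^(2 * k) \<le> X \<omega> ^ (2 * k)}"
  proof (rule finite_measure_mono)
    show "{\<omega>\<in>space M. b < \<bar>X \<omega>\<bar>} \<subseteq> {\<omega>\<in>space M. b^(2 * k) \<le> X \<omega> ^ (2 * k)}"
    proof safe
      fix \<omega> assume "b < \<bar>X \<omega>\<bar>"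
      then have "b^(2 * k) \<le> \<bar>X \<omega>\<bar>^(2 * k)" using \<open>0 < b\<close> by (intro power_mono) auto
      then show "b^(2 * k) \<le> X \<omega> ^ (2 * k)" by (simp add: power_even_abs)
    qed
  qed measurable
  also have "\<dots> \<le> expectation (\<lambda>\<omega>. X \<omega> ^ (2 * k)) / b^(2 * k)"
    by (rule integral_Markov_inequality_measure[OF std_normal_even_moment(1)[OF X] sets.top])
       (use \<open>0 < b\<close> in \<open>auto simp: zero_le_even_power\<close>)
  finally show ?thesis using std_normal_even_moment(2)[OF X] by simp
qed

lemma prob_std_normal_eq_0:
  assumes X: "distributed M lborel X (\<lambda>u. ennreal (std_normal_density u))"
  shows "prob {\<omega>\<in>space M. X \<omega> = 0} = 0"
proof -
  have "emeasure M (X -` {0} \<inter> space M) = (\<integral>\<^sup>+u. ennreal (std_normal_density u) * indicator {0} u \<partial>lborel)"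
    using distributed_emeasure[OF X, of "{0}"] by simp
  also have "\<dots> = 0"
    using nn_integral_indicator_singleton[of 0 lborel "\<lambda>u. ennreal (std_normal_density u)"] by simp
  finally show ?thesis
    by (simp add: measure_def vimage_def Int_def conj_commute)
qed

text \<open>\<open>x\<^sup>2 - x\<^sup>4/4 \<le> min x\<^sup>2 1\<close>, and the Gaussian moments give \<open>1 - 3/4\<close> on the left.\<close>

lemma expectation_min_square_one_ge:
  assumes X: "distributed M lborel X (\<lambda>u. ennreal (std_normal_density u))"
  shows "1/4 \<le> expectation (\<lambda>\<omega>. min ((X \<omega>)^2) 1)"
proof -
  have [measurable]: "X \<in> borel_measurable M" using distributed_measurable[OF X] by simp
  have moments: "integrable M (\<lambda>\<omega>. X \<omega> ^ (2 * 1))" "integrable M (\<lambda>\<omega>. X \<omega> ^ (2 * 2))"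
    "expectation (\<lambda>\<omega>. X \<omega> ^ (2 * 1)) = 1" "expectation (\<lambda>\<omega>. X \<omega> ^ (2 * 2)) = 3"
    using std_normal_even_moment[OF X, of 1] std_normal_even_moment[OF X, of 2]
    by (simp_all add: fact_numeral)
  have "expectation (\<lambda>\<omega>. X \<omega> ^ (2 * 1) - X \<omega> ^ (2 * 2) / 4) \<le> expectation (\<lambda>\<omega>. min ((X \<omega>)^2) 1)"
  proof (rule integral_mono)
    show "integrable M (\<lambda>\<omega>. min ((X \<omega>)^2) 1)"
      by (rule integrable_const_bound[where B = 1]) auto
    fix \<omega>
    have "X \<omega> ^ 2 - X \<omega> ^ 4 / 4 \<le> X \<omega> ^ 2" by (simp add: zero_le_even_power)
    moreover have "0 \<le> (X \<omega> ^ 2 - 2)^2" by simp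
    then have "X \<omega> ^ 2 - X \<omega> ^ 4 / 4 \<le> 1"
      by (simp add: power2_eq_square power4_eq_xxxx algebra_simps)
    ultimately show "X \<omega> ^ (2 * 1) - X \<omega> ^ (2 * 2) / 4 \<le> min ((X \<omega>)^2) 1" by simp
  qed (use moments in auto)
  moreover have "expectation (\<lambda>\<omega>. X \<omega> ^ (2 * 1) - X \<omega> ^ (2 * 2) / 4) = 1 - 3 / 4"
    using moments by (simp add: Bochner_Integration.integral_diff)
  ultimately show ?thesis by simp
qed

lemma prob_sum_min_square_small_le:
  fixes I :: "'i set" and Z :: "'i \<Rightarrow> 'a \<Rightarrow> real"
  assumes "finite I" "I \<noteq> {}" and indep: "indep_vars (\<lambda>_. borel) Z I"
    and Z: "\<And>i. i \<in> I \<Longrightarrow> distributed M lborel (Z i) (\<lambda>u. ennreal (std_normal_density u))"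
  shows "prob {\<omega>\<in>space M. (\<Sum>i\<in>I. min ((Z i \<omega>)^2) 1) < real (card I) / 8} \<le> exp (- real (card I) / 32)"
proof -
  define Y where "Y i \<omega> = min ((Z i \<omega>)^2) 1" for i \<omega>
  have "indep_vars (\<lambda>_. borel) Y I"
    unfolding Y_def by (rule indep_vars_compose2[OF indep]) auto
  then interpret H: Hoeffding_ineq M I Y "\<lambda>_. 0" "\<lambda>_. 1" "\<Sum>i\<in>I. expectation (Y i)"
    by unfold_locales (auto simp: \<open>finite I\<close> Y_def)
  have [measurable]: "Y i \<in> borel_measurable M" if "i \<in> I" for i
    using H.random_variable[OF that] by simp
  have "(\<Sum>i\<in>I. (1/4::real)) \<le> (\<Sum>i\<in>I. expectation (Y i))"
    unfolding Y_def using expectation_min_square_one_ge[OF Z] by (intro sum_mono) auto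
  then have mean: "real (card I) / 4 \<le> (\<Sum>i\<in>I. expectation (Y i))" by simp
  have card: "0 < real (card I)" using assms(1,2) by (simp add: card_gt_0_iff)
  have "prob {\<omega>\<in>space M. (\<Sum>i\<in>I. Y i \<omega>) < real (card I) / 8}
      \<le> prob {\<omega>\<in>space M. (\<Sum>i\<in>I. Y i \<omega>) \<le> (\<Sum>i\<in>I. expectation (Y i)) - real (card I) / 8}"
    using mean by (intro finite_measure_mono) auto
  also have "\<dots> \<le> exp (-2 * (real (card I) / 8)^2 / (\<Sum>i\<in>I. (1 - 0)^2))"
    using card by (intro H.Hoeffding_ineq_le) auto
  also have "\<dots> = exp (- real (card I) / 32)"
    using card by (simp add: power2_eq_square field_simps)
  finally show ?thesis unfolding Y_def .
qed

lemma eventually_not_in_events: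
  assumes events: "\<And>m. m0 \<le> m \<Longrightarrow> B m \<in> events"
    and bound: "\<And>m. m0 \<le> m \<Longrightarrow> prob (B m) \<le> p m" and "summable p" and "0 < \<delta>"
  shows "\<exists>E\<in>events. 1 - \<delta> \<le> prob E \<and> (\<forall>\<omega>\<in>E. eventually (\<lambda>m. \<omega> \<notin> B m) sequentially)"
proof -
  obtain N where N: "\<And>n. N \<le> n \<Longrightarrow> norm (\<Sum>i. p (i + n)) < \<delta>"
    using suminf_exist_split[OF \<open>0 < \<delta>\<close> \<open>summable p\<close>] by blast
  define m1 where "m1 = max N m0"
  define E where "E = space M - (\<Union>i. B (i + m1))"
  have tail_events: "range (\<lambda>i. B (i + m1)) \<subseteq> events" using events by (auto simp: m1_def)
  have tail_summable: "summable (\<lambda>i. p (i + m1))"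
    using \<open>summable p\<close> by (rule summable_ignore_initial_segment)
  have tail_bound: "prob (B (i + m1)) \<le> p (i + m1)" for i using bound by (simp add: m1_def)
  have prob_summable: "summable (\<lambda>i. prob (B (i + m1)))"
    by (rule summable_comparison_test[OF _ tail_summable]) (auto intro!: exI[of _ 0] tail_bound)
  have "prob (\<Union>i. B (i + m1)) \<le> (\<Sum>i. prob (B (i + m1)))"
    by (rule finite_measure_subadditive_countably[OF tail_events prob_summable])
  also have "\<dots> \<le> (\<Sum>i. p (i + m1))"
    by (rule suminf_le[OF tail_bound prob_summable tail_summable])
  also have "\<dots> < \<delta>"
    using N[of m1] suminf_nonneg[OF tail_summable] order_trans[OF measure_nonneg tail_bound]
    by (simp add: m1_def)
  finally have "prob (\<Union>i. B (i + m1)) < \<delta>" .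
  moreover have "prob E = 1 - prob (\<Union>i. B (i + m1))"
    unfolding E_def using tail_events by (intro prob_compl) auto
  moreover have "eventually (\<lambda>m. \<omega> \<notin> B m) sequentially" if "\<omega> \<in> E" for \<omega>
    using eventually_ge_at_top[of m1]
  proof eventually_elim
    case (elim m)
    have "B ((m - m1) + m1) \<subseteq> (\<Union>i. B (i + m1))" by blast
    with elim that show ?case unfolding E_def by auto
  qed
  moreover have "E \<in> events" unfolding E_def using tail_events by auto
  ultimately show ?thesis by (intro bexI[of _ E]) auto
qed

lemma prob_exists_std_normal_gt_le:
  assumes "finite I" and Z: "\<And>i. i \<in> I \<Longrightarrow> distributed M lborel (Z i) (\<lambda>u. ennreal (std_normal_density u))"
    and "0 < b"
  shows "prob (\<Union>i\<in>I. {\<omega>\<in>space M. b < \<bar>Z i \<omega>\<bar>}) \<le> real (card I) * ((fact (2 * q) / (2^q * fact q)) / b^(2 * q))"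
proof -
  have [measurable]: "Z i \<in> borel_measurable M" if "i \<in> I" for i
    using distributed_measurable[OF Z[OF that]] by simp
  have "prob (\<Union>i\<in>I. {\<omega>\<in>space M. b < \<bar>Z i \<omega>\<bar>}) \<le> (\<Sum>i\<in>I. prob {\<omega>\<in>space M. b < \<bar>Z i \<omega>\<bar>})"
    using \<open>finite I\<close> by (intro finite_measure_subadditive_finite) auto
  also have "\<dots> \<le> (\<Sum>i\<in>I. (fact (2 * q) / (2^q * fact q)) / b^(2 * q))"
    using prob_std_normal_tail_le[OF Z \<open>0 < b\<close>] by (intro sum_mono) auto
  finally show ?thesis by simp
qed

lemma good_init_outside_event:
  fixes A :: "nat \<Rightarrow> 'a \<Rightarrow> real" and W :: "nat \<Rightarrow> 'a \<Rightarrow> real^'d"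
  assumes indep: "indep_vars (\<lambda>_. borel) (\<lambda>i. case i of Inl k \<Rightarrow> A k | Inr (k, j) \<Rightarrow> (\<lambda>\<omega>. W k \<omega> $ j))
      (Inl ` {..<m} \<union> Inr ` ({..<m} \<times> UNIV))"
    and A: "\<And>k. k < m \<Longrightarrow> distributed M lborel (A k) (\<lambda>u. ennreal (std_normal_density u))"
    and W: "\<And>k j. k < m \<Longrightarrow> distributed M lborel (\<lambda>\<omega>. W k \<omega> $ j) (\<lambda>u. ennreal (std_normal_density u))"
    and "0 < m" and q: "3 \<le> 2 * real q * \<kappa>"
  shows "\<exists>B\<in>events. prob B \<le> (1 + real CARD('d)) * (fact (2 * q) / (2^q * fact q)) * inverse (real m ^ 2)
      + exp (- 1 / 32) ^ m \<and> (\<forall>\<omega> \<in> space M - B. good_init \<kappa> m (\<lambda>k. A k \<omega>) (\<lambda>k. W k \<omega>))"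
proof -
  define I where "I = Inl ` {..<m} \<union> Inr ` ({..<m} \<times> (UNIV :: 'd set))"
  define F where "F = (\<lambda>i. case i of Inl k \<Rightarrow> A k | Inr (k, j) \<Rightarrow> (\<lambda>\<omega>. W k \<omega> $ j))"
  define Cq :: real where "Cq = fact (2 * q) / (2^q * fact q)"
  have F: "distributed M lborel (F i) (\<lambda>u. ennreal (std_normal_density u))" if "i \<in> I" for i
    using that A W unfolding I_def F_def by auto
  have F_meas: "F i \<in> borel_measurable M" if "i \<in> I" for i
    using distributed_measurable[OF F[OF that]] by simp
  have "finite I" unfolding I_def by simp
  have card_I: "card I = m + m * CARD('d)"
    unfolding I_def by (subst card_Un_disjoint) (auto simp: card_image card_cartesian_product)
  define U1 where "U1 = (\<Union>i\<in>I. {\<omega>\<in>space M. real m powr \<kappa> < \<bar>F i \<omega>\<bar>})"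
  define U2 where "U2 = {\<omega>\<in>space M. (\<Sum>i\<in>Inl ` {..<m}. min ((F i \<omega>)^2) 1) < real (card (Inl ` {..<m} :: (nat + nat \<times> 'd) set)) / 8}"
  \<comment> \<open>\<open>w\<^sub>0(0) \<noteq> 0\<close> as soon as one fixed (arbitrary) coordinate is nonzero\<close>
  define U3 where "U3 = {\<omega>\<in>space M. W 0 \<omega> $ (undefined :: 'd) = 0}"
  have U1: "U1 \<in> events" unfolding U1_def using \<open>finite I\<close> F_meas by (intro sets.finite_UN) auto
  have "(\<lambda>\<omega>. \<Sum>i\<in>Inl ` {..<m}. min ((F i \<omega>)^2) 1) \<in> borel_measurable M"
    using F_meas unfolding I_def by (intro borel_measurable_sum) auto
  then have U2: "U2 \<in> events" unfolding U2_def by measurable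
  have "(\<lambda>\<omega>. W 0 \<omega> $ (undefined :: 'd)) \<in> borel_measurable M"
    using distributed_measurable[OF W[OF \<open>0 < m\<close>]] by simp
  then have U3: "U3 \<in> events" unfolding U3_def by measurable
  have "prob U1 \<le> real (card I) * (Cq / (real m powr \<kappa>)^(2 * q))"
    unfolding U1_def Cq_def using \<open>finite I\<close> F \<open>0 < m\<close> by (intro prob_exists_std_normal_gt_le) auto
  also have "\<dots> \<le> real (card I) * (Cq / real m ^ 3)"
    using cube_le_powr_power[OF \<open>0 < m\<close> q] \<open>0 < m\<close>
    by (intro mult_left_mono divide_left_mono) (auto simp: Cq_def)
  also have "\<dots> = (1 + real CARD('d)) * Cq * inverse (real m ^ 2)"
    using \<open>0 < m\<close> unfolding card_I by (simp add: field_simps power3_eq_cube power2_eq_square)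
  finally have p1: "prob U1 \<le> (1 + real CARD('d)) * Cq * inverse (real m ^ 2)" .
  have card_Inl: "card (Inl ` {..<m} :: (nat + nat \<times> 'd) set) = m" by (simp add: card_image)
  have "prob U2 \<le> exp (- real (card (Inl ` {..<m} :: (nat + nat \<times> 'd) set)) / 32)"
    unfolding U2_def
  proof (rule prob_sum_min_square_small_le)
    show "indep_vars (\<lambda>_. borel) F (Inl ` {..<m})"
      using indep unfolding F_def by (rule indep_vars_subset) auto
  qed (use \<open>0 < m\<close> F in \<open>auto simp: I_def\<close>)
  then have p2: "prob U2 \<le> exp (- 1 / 32) ^ m"
    unfolding card_Inl by (simp add: exp_of_nat_mult[symmetric] mult_ac)
  have p3: "prob U3 = 0" unfolding U3_def by (rule prob_std_normal_eq_0[OF W[OF \<open>0 < m\<close>]])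
  have "prob (U1 \<union> U2 \<union> U3) \<le> prob U1 + prob U2 + prob U3"
    using U1 U2 U3 measure_Un_le[of "U1 \<union> U2" M U3] measure_Un_le[of U1 M U2] by auto
  moreover have "good_init \<kappa> m (\<lambda>k. A k \<omega>) (\<lambda>k. W k \<omega>)" if "\<omega> \<in> space M - (U1 \<union> U2 \<union> U3)" for \<omega>
  proof -
    have bounded: "\<bar>F i \<omega>\<bar> \<le> real m powr \<kappa>" if "i \<in> I" for i
      using \<open>\<omega> \<in> space M - (U1 \<union> U2 \<union> U3)\<close> that unfolding U1_def by (auto simp: not_less)
    have "(\<Sum>i\<in>Inl ` {..<m}. min ((F i \<omega>)^2) 1) = (\<Sum>k<m. min ((A k \<omega>)^2) 1)"
      by (subst sum.reindex) (auto simp: F_def)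
    then have "real m / 8 \<le> (\<Sum>k<m. min ((A k \<omega>)^2) 1)"
      using that unfolding U2_def card_Inl by (auto simp: not_less)
    moreover have "W 0 \<omega> \<noteq> 0" using that unfolding U3_def by auto
    moreover have "\<bar>A k \<omega>\<bar> \<le> real m powr \<kappa>" "\<bar>W k \<omega> $ j\<bar> \<le> real m powr \<kappa>" if "k < m" for k j
      using bounded[of "Inl k"] bounded[of "Inr (k, j)"] that by (auto simp: I_def F_def)
    ultimately show ?thesis unfolding good_init_def by auto
  qed
  ultimately show ?thesis
    using U1 U2 U3 p1 p2 p3 unfolding Cq_def by (intro bexI[of _ "U1 \<union> U2 \<union> U3"]) auto
qed

lemma eventually_good_init:
  fixes A :: "nat \<Rightarrow> nat \<Rightarrow> 'a \<Rightarrow> real" and W :: "nat \<Rightarrow> nat \<Rightarrow> 'a \<Rightarrow> real^'d"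
  assumes indep: "\<And>m. indep_vars (\<lambda>_. borel) (\<lambda>i. case i of Inl k \<Rightarrow> A m k | Inr (k, j) \<Rightarrow> (\<lambda>\<omega>. W m k \<omega> $ j))
      (Inl ` {..<m} \<union> Inr ` ({..<m} \<times> UNIV))"
    and A: "\<And>m k. k < m \<Longrightarrow> distributed M lborel (A m k) (\<lambda>u. ennreal (std_normal_density u))"
    and W: "\<And>m k j. k < m \<Longrightarrow> distributed M lborel (\<lambda>\<omega>. W m k \<omega> $ j) (\<lambda>u. ennreal (std_normal_density u))"
    and "0 < \<kappa>" "0 < \<delta>"
  shows "\<exists>E\<in>events. 1 - \<delta> \<le> prob E \<and>
    (\<forall>\<omega>\<in>E. eventually (\<lambda>m. good_init \<kappa> m (\<lambda>k. A m k \<omega>) (\<lambda>k. W m k \<omega>)) sequentially)"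
proof -
  define q where "q = nat \<lceil>3 / (2 * \<kappa>)\<rceil>"
  have "3 / (2 * \<kappa>) \<le> real q" unfolding q_def by linarith
  then have q: "3 \<le> 2 * real q * \<kappa>" using \<open>0 < \<kappa>\<close> by (simp add: divide_le_eq mult_ac)
  define bound where "bound m = (1 + real CARD('d)) * (fact (2 * q) / (2^q * fact q)) * inverse (real m ^ 2)
      + exp (- 1 / 32) ^ m" for m :: nat
  have "\<forall>m. \<exists>B. 0 < m \<longrightarrow> B \<in> events \<and> prob B \<le> bound m
      \<and> (\<forall>\<omega> \<in> space M - B. good_init \<kappa> m (\<lambda>k. A m k \<omega>) (\<lambda>k. W m k \<omega>))"
    using good_init_outside_event[OF indep A W _ q] unfolding bound_def by blast
  then obtain B where B: "\<And>m. 0 < m \<Longrightarrow> B m \<in> events \<and> prob (B m) \<le> bound m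
      \<and> (\<forall>\<omega> \<in> space M - B m. good_init \<kappa> m (\<lambda>k. A m k \<omega>) (\<lambda>k. W m k \<omega>))"
    by metis
  have "summable bound" unfolding bound_def
    by (intro summable_add summable_mult inverse_power_summable summable_geometric) auto
  then obtain E where E: "E \<in> events" "1 - \<delta> \<le> prob E" "\<forall>\<omega>\<in>E. eventually (\<lambda>m. \<omega> \<notin> B m) sequentially"
    using eventually_not_in_events[of 1 B bound \<delta>] B \<open>0 < \<delta>\<close> by auto
  have "eventually (\<lambda>m. good_init \<kappa> m (\<lambda>k. A m k \<omega>) (\<lambda>k. W m k \<omega>)) sequentially" if "\<omega> \<in> E" for \<omega>
    using E(3)[rule_format, OF that] eventually_gt_at_top[of 0]
  proof eventually_elim
    case (elim m)
    then show ?case using B[of m] sets.sets_into_space[OF E(1)] that by auto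
  qed
  with E(1,2) show ?thesis by blast
qed

end

section \<open>Limits along the width\<close>

lemma SUP_tendsto_PInfty_of_witness:
  assumes witness: "eventually (\<lambda>m. \<exists>t\<in>S m. g m \<le> f m t) sequentially"
    and g: "filterlim g at_top sequentially"
  shows "((\<lambda>m. SUP t\<in>S m. ereal (f m t)) \<longlongrightarrow> \<infinity>) sequentially"
  unfolding tendsto_PInfty
proof
  fix q :: real
  show "eventually (\<lambda>m. ereal q < (SUP t\<in>S m. ereal (f m t))) sequentially"
    using witness filterlim_at_top_dense[THEN iffD1, OF g, rule_format, of q]
  proof eventually_elim
    case (elim m)
    then obtain t where "t \<in> S m" "g m \<le> f m t" by blast
    then have "ereal q < ereal (f m t)" using elim by simp
    also have "\<dots> \<le> (SUP t\<in>S m. ereal (f m t))" using \<open>t \<in> S m\<close> by (rule SUP_upper)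
    finally show ?case .
  qed
qed

lemma SUP_tendsto_1_of_witness:
  assumes witness: "eventually (\<lambda>m. \<exists>t\<in>S m. 1 - h m \<le> f m t) sequentially"
    and h: "(h \<longlongrightarrow> 0) sequentially" and le_1: "\<And>m t. t \<in> S m \<Longrightarrow> f m t \<le> 1"
  shows "((\<lambda>m. SUP t\<in>S m. ereal (f m t)) \<longlongrightarrow> ereal 1) sequentially"
proof (rule tendsto_sandwich[where f = "\<lambda>m. ereal (1 - h m)" and h = "\<lambda>m. ereal 1"])
  show "eventually (\<lambda>m. ereal (1 - h m) \<le> (SUP t\<in>S m. ereal (f m t))) sequentially"
    using witness
  proof eventually_elim
    case (elim m)
    then obtain t where "t \<in> S m" "1 - h m \<le> f m t" by blast
    then have "ereal (1 - h m) \<le> ereal (f m t)" by simp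
    also have "\<dots> \<le> (SUP t\<in>S m. ereal (f m t))" using \<open>t \<in> S m\<close> by (rule SUP_upper)
    finally show ?case .
  qed
  show "eventually (\<lambda>m. (SUP t\<in>S m. ereal (f m t)) \<le> ereal 1) sequentially"
    using le_1 by (intro always_eventually allI SUP_least) simp
  show "((\<lambda>m. ereal (1 - h m)) \<longlongrightarrow> ereal 1) sequentially"
    using h unfolding lim_ereal by (auto intro: tendsto_eq_intros)
qed simp

lemma good_init_consequences:
  fixes w0 :: "nat \<Rightarrow> real^'d"
  assumes "good_init \<kappa> m a0 w0" "0 < m"
  shows "\<And>k. k < m \<Longrightarrow> \<bar>a0 k\<bar> \<le> real CARD('d) * real m powr \<kappa> \<and> norm (w0 k) \<le> real CARD('d) * real m powr \<kappa>"
    and "sqrt (real m) * (1 / sqrt 8) \<le> L2_set a0 {..<m}"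
    and "0 < theta_w_norm m w0"
proof -
  fix k assume "k < m"
  then have a: "\<bar>a0 k\<bar> \<le> real m powr \<kappa>" and w: "\<And>j. \<bar>w0 k $ j\<bar> \<le> real m powr \<kappa>"
    using assms(1) unfolding good_init_def by auto
  have "\<bar>a0 k\<bar> \<le> real CARD('d) * real m powr \<kappa>"
    using a mult_right_mono[of 1 "real CARD('d)" "real m powr \<kappa>"] by simp
  moreover have "norm (w0 k) \<le> real CARD('d) * real m powr \<kappa>"
  proof -
    have "norm (w0 k) \<le> (\<Sum>j\<in>UNIV. \<bar>w0 k $ j\<bar>)" by (rule norm_le_l1_cart)
    also have "\<dots> \<le> (\<Sum>j\<in>(UNIV :: 'd set). real m powr \<kappa>)" using w by (intro sum_mono) auto
    finally show ?thesis by simp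
  qed
  ultimately show "\<bar>a0 k\<bar> \<le> real CARD('d) * real m powr \<kappa> \<and> norm (w0 k) \<le> real CARD('d) * real m powr \<kappa>" ..
next
  have "real m / 8 \<le> (\<Sum>k<m. (a0 k)^2)"
    using assms(1) sum_mono[of "{..<m}" "\<lambda>k. min ((a0 k)^2) 1" "\<lambda>k. (a0 k)^2"]
    unfolding good_init_def by fastforce
  then have "sqrt (real m / 8) \<le> L2_set a0 {..<m}"
    unfolding L2_set_def by (rule real_sqrt_le_mono)
  then show "sqrt (real m) * (1 / sqrt 8) \<le> L2_set a0 {..<m}"
    by (simp add: real_sqrt_divide)
next
  have "norm (w0 0) \<le> theta_w_norm m w0"
    unfolding theta_w_norm_eq_L2_set using assms(2) by (intro member_le_L2_set) auto
  moreover have "0 < norm (w0 0)" using assms(1) unfolding good_init_def by simp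
  ultimately show "0 < theta_w_norm m w0" by linarith
qed

locale gradient_flow_family = network_data \<sigma> \<sigma>' \<sigma>'' CL n x y c
  for \<sigma> \<sigma>' \<sigma>'' CL n and x :: "nat \<Rightarrow> real^'d" and y c +
  fixes \<nu> \<epsilon> :: "nat \<Rightarrow> real" and \<gamma>1 \<gamma>2 :: real
    and a :: "nat \<Rightarrow> real \<Rightarrow> nat \<Rightarrow> real" and w :: "nat \<Rightarrow> real \<Rightarrow> nat \<Rightarrow> real^'d"
  assumes flow: "\<And>m. gradient_flow \<sigma> \<sigma>' \<sigma>'' CL n x y c m (\<nu> m) (\<epsilon> m) (a m) (w m)"
    and lim_\<nu>: "((\<lambda>m. - ln (\<nu> m) / ln (real m)) \<longlongrightarrow> \<gamma>1) sequentially"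
    and lim_\<epsilon>: "((\<lambda>m. - ln (\<epsilon> m) / ln (real m)) \<longlongrightarrow> \<gamma>2) sequentially"
    and \<gamma>_gt_1: "1 < \<gamma>1 + \<gamma>2" and \<gamma>'_neg: "\<gamma>1 - \<gamma>2 < 0"
begin

abbreviation "\<tau> \<equiv> threshold_exponent \<gamma>1 \<gamma>2"
abbreviation "\<kappa> \<equiv> growth_exponent \<gamma>1 \<gamma>2"

lemma \<nu>_pos: "0 < \<nu> m" and \<epsilon>_pos: "0 < \<epsilon> m"
  using gradient_flow.\<nu>_pos[OF flow] gradient_flow.\<epsilon>_pos[OF flow] by auto

text \<open>\<open>init_bound m\<close> bounds the initial weights, the linearization is evaluated at time
  \<open>time_scale m / r\<close>, up to which all weights stay below \<open>weight_bound m\<close>.\<close>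

definition init_bound :: "nat \<Rightarrow> real" where
  "init_bound m = real CARD('d) * real m powr \<kappa>"

definition time_scale :: "nat \<Rightarrow> real" where
  "time_scale m = (real m powr \<kappa>)^2"

definition weight_bound :: "nat \<Rightarrow> real" where
  "weight_bound m = 4 * init_bound m * (1 + K_max * time_scale m)"

definition lin_error :: "nat \<Rightarrow> real" where
  "lin_error m = lin_error_coeff * (time_scale m / (\<nu> m / \<epsilon> m) * weight_bound m + \<epsilon> m * (weight_bound m)^2
     + real m * \<nu> m * \<epsilon> m * (weight_bound m)^3)"

lemma scales_tendsto_0:
  shows "((\<lambda>m. real m * \<nu> m * \<epsilon> m * (real m powr \<kappa>)^9 * real m powr \<tau>) \<longlongrightarrow> 0) sequentially"
    and "((\<lambda>m. \<epsilon> m * (real m powr \<kappa>)^6 * real m powr \<tau>) \<longlongrightarrow> 0) sequentially"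
    and "((\<lambda>m. \<epsilon> m / \<nu> m * (real m powr \<kappa>)^5) \<longlongrightarrow> 0) sequentially"
proof -
  note bounds = growth_exponent_bounds[OF \<gamma>_gt_1 \<gamma>'_neg]
  have pow: "(real m powr \<kappa>)^k = real m powr (real k * \<kappa>)" if "0 < k" for m k :: nat
    using that by (cases "m = 0") (simp_all add: powr_power)
  have "((\<lambda>m. \<nu> m * \<epsilon> m * real m powr (1 + 9 * \<kappa> + \<tau>)) \<longlongrightarrow> 0) sequentially"
  proof (rule mult_powr_tendsto_0_of_log_ratio)
    show "0 < \<nu> m * \<epsilon> m" for m using \<nu>_pos \<epsilon>_pos by simp
    show "((\<lambda>m. - ln (\<nu> m * \<epsilon> m) / ln (real m)) \<longlongrightarrow> \<gamma>1 + \<gamma>2) sequentially"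
    proof -
      have "ln (\<nu> m * \<epsilon> m) = ln (\<nu> m) + ln (\<epsilon> m)" for m
        using \<nu>_pos[of m] \<epsilon>_pos[of m] by (simp add: ln_mult)
      then show ?thesis using tendsto_add[OF lim_\<nu> lim_\<epsilon>] by (simp add: add_divide_distrib diff_divide_distrib)
    qed
  qed (use bounds in simp)
  moreover have "eventually (\<lambda>m. \<nu> m * \<epsilon> m * real m powr (1 + 9 * \<kappa> + \<tau>)
      = real m * \<nu> m * \<epsilon> m * (real m powr \<kappa>)^9 * real m powr \<tau>) sequentially"
    using eventually_gt_at_top[of 0] by eventually_elim (simp add: pow powr_add)
  ultimately show "((\<lambda>m. real m * \<nu> m * \<epsilon> m * (real m powr \<kappa>)^9 * real m powr \<tau>) \<longlongrightarrow> 0) sequentially"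
    by (rule Lim_transform_eventually)
  have "((\<lambda>m. \<epsilon> m * real m powr (6 * \<kappa> + \<tau>)) \<longlongrightarrow> 0) sequentially"
    using \<epsilon>_pos lim_\<epsilon> bounds by (intro mult_powr_tendsto_0_of_log_ratio) auto
  then show "((\<lambda>m. \<epsilon> m * (real m powr \<kappa>)^6 * real m powr \<tau>) \<longlongrightarrow> 0) sequentially"
    by (simp add: pow powr_add mult.assoc)
  have "((\<lambda>m. \<epsilon> m / \<nu> m * real m powr (5 * \<kappa>)) \<longlongrightarrow> 0) sequentially"
  proof (rule mult_powr_tendsto_0_of_log_ratio)
    show "0 < \<epsilon> m / \<nu> m" for m using \<nu>_pos \<epsilon>_pos by simp
    show "((\<lambda>m. - ln (\<epsilon> m / \<nu> m) / ln (real m)) \<longlongrightarrow> \<gamma>2 - \<gamma>1) sequentially"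
    proof -
      have "ln (\<epsilon> m / \<nu> m) = ln (\<epsilon> m) - ln (\<nu> m)" for m
        using \<nu>_pos[of m] \<epsilon>_pos[of m] by (simp add: ln_div)
      then show ?thesis using tendsto_diff[OF lim_\<epsilon> lim_\<nu>] by (simp add: diff_divide_distrib)
    qed
  qed (use bounds in simp)
  then show "((\<lambda>m. \<epsilon> m / \<nu> m * (real m powr \<kappa>)^5) \<longlongrightarrow> 0) sequentially"
    by (simp add: pow)
qed

lemma weight_bound_le_power:
  assumes "0 < m"
  defines "C \<equiv> 4 * real CARD('d) * (1 + K_max)"
  shows "1 \<le> real m powr \<kappa>" and "1 \<le> init_bound m" and "init_bound m \<le> weight_bound m"
    and "weight_bound m \<le> C * (real m powr \<kappa>)^3"
proof -
  define p where "p = real m powr \<kappa>"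
  show p: "1 \<le> real m powr \<kappa>"
    using assms growth_exponent_bounds(1)[OF \<gamma>_gt_1 \<gamma>'_neg] by (intro ge_one_powr_ge_zero) auto
  have "1 * 1 \<le> real CARD('d) * p" unfolding p_def using p by (intro mult_mono) auto
  then show Q: "1 \<le> init_bound m" unfolding init_bound_def p_def by simp
  then show "init_bound m \<le> weight_bound m"
    unfolding weight_bound_def time_scale_def using K_max_nonneg by (simp add: algebra_simps)
  have "p * 1 \<le> p * p^2" using p unfolding p_def by (intro mult_left_mono) (auto simp: one_le_power)
  then have "4 * real CARD('d) * p \<le> 4 * real CARD('d) * p^3"
    using p unfolding p_def by (intro mult_left_mono) (auto simp: power3_eq_cube power2_eq_square)
  then show "weight_bound m \<le> C * (real m powr \<kappa>)^3"
    unfolding weight_bound_def init_bound_def time_scale_def C_def p_def[symmetric]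
    by (simp add: algebra_simps power3_eq_cube power2_eq_square)
qed

lemma weight_bound_estimates:
  assumes "0 < m"
  defines "C \<equiv> 4 * real CARD('d) * (1 + K_max)" and "p \<equiv> real m powr \<kappa>"
  shows "real m * \<nu> m * \<epsilon> m * (weight_bound m)^3 * real m powr \<tau>
           \<le> C^3 * (real m * \<nu> m * \<epsilon> m * p^9 * real m powr \<tau>)"
    and "\<epsilon> m * (weight_bound m)^2 * real m powr \<tau> \<le> C^2 * (\<epsilon> m * p^6 * real m powr \<tau>)"
    and "time_scale m / (\<nu> m / \<epsilon> m) * weight_bound m \<le> C * (\<epsilon> m / \<nu> m * p^5)"
    and "(init_bound m)^2 \<le> (weight_bound m)^3"
proof -
  note wb = weight_bound_le_power[OF assms(1), folded C_def p_def]
  have W_nonneg: "0 \<le> weight_bound m" using wb by linarith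
  have pos: "0 < real m * \<nu> m * \<epsilon> m * real m powr \<tau>" "0 < \<epsilon> m * real m powr \<tau>" "0 < \<epsilon> m / \<nu> m"
    using assms(1) \<nu>_pos[of m] \<epsilon>_pos[of m] by simp_all
  have "(weight_bound m)^3 \<le> (C * p^3)^3" using wb W_nonneg by (intro power_mono) auto
  then have "(weight_bound m)^3 * (real m * \<nu> m * \<epsilon> m * real m powr \<tau>)
      \<le> (C * p^3)^3 * (real m * \<nu> m * \<epsilon> m * real m powr \<tau>)"
    using pos by (intro mult_right_mono) auto
  then show "real m * \<nu> m * \<epsilon> m * (weight_bound m)^3 * real m powr \<tau>
      \<le> C^3 * (real m * \<nu> m * \<epsilon> m * p^9 * real m powr \<tau>)"
    by (simp add: power_mult_distrib power_mult[symmetric] mult_ac)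
  have "(weight_bound m)^2 \<le> (C * p^3)^2" using wb W_nonneg by (intro power_mono) auto
  then have "(weight_bound m)^2 * (\<epsilon> m * real m powr \<tau>) \<le> (C * p^3)^2 * (\<epsilon> m * real m powr \<tau>)"
    using pos by (intro mult_right_mono) auto
  then show "\<epsilon> m * (weight_bound m)^2 * real m powr \<tau> \<le> C^2 * (\<epsilon> m * p^6 * real m powr \<tau>)"
    by (simp add: power_mult_distrib power_mult[symmetric] mult_ac)
  have "0 \<le> \<epsilon> m / \<nu> m * p^2" using \<nu>_pos[of m] \<epsilon>_pos[of m] by simp
  then have "weight_bound m * (\<epsilon> m / \<nu> m * p^2) \<le> (C * p^3) * (\<epsilon> m / \<nu> m * p^2)"
    using wb by (intro mult_right_mono) auto
  then show "time_scale m / (\<nu> m / \<epsilon> m) * weight_bound m \<le> C * (\<epsilon> m / \<nu> m * p^5)"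
    unfolding time_scale_def p_def[symmetric] by (simp add: power_add[symmetric] mult_ac)
  have "(init_bound m)^2 \<le> (weight_bound m)^2" using wb by (intro power_mono) auto
  also have "\<dots> \<le> (weight_bound m)^3" using wb by (intro power_increasing) auto
  finally show "(init_bound m)^2 \<le> (weight_bound m)^3" .
qed

lemma eventually_scale_conditions:
  "eventually (\<lambda>m. 0 < m \<and> real m * \<nu> m * \<epsilon> m * CL * X * (init_bound m)^2 \<le> 1 \<and> 1 \<le> \<nu> m / \<epsilon> m
      \<and> 2 * K_max * time_scale m \<le> \<nu> m / \<epsilon> m
      \<and> real m * \<nu> m * \<epsilon> m * (weight_bound m)^3 + \<epsilon> m * (weight_bound m)^2 \<le> real m powr (- \<tau>))
    sequentially"
proof -
  define C where "C = 4 * real CARD('d) * (1 + K_max)"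
  define u1 where "u1 m = real m * \<nu> m * \<epsilon> m * (real m powr \<kappa>)^9 * real m powr \<tau>" for m
  define u2 where "u2 m = \<epsilon> m * (real m powr \<kappa>)^6 * real m powr \<tau>" for m
  define u3 where "u3 m = \<epsilon> m / \<nu> m * (real m powr \<kappa>)^5" for m
  note lim = scales_tendsto_0[folded u1_def u2_def u3_def]
  have small: "eventually (\<lambda>m. f m < 1) sequentially" if "(f \<longlongrightarrow> 0) sequentially" for f :: "nat \<Rightarrow> real"
    using order_tendstoD(2)[OF that, of 1] by simp
  have "eventually (\<lambda>m. C^3 * u1 m + C^2 * u2 m < 1) sequentially"
    using lim by (intro small) (auto intro!: tendsto_eq_intros)
  moreover have "eventually (\<lambda>m. CL * X * C^3 * u1 m < 1) sequentially"
    using lim by (intro small) (auto intro!: tendsto_eq_intros)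
  moreover have "eventually (\<lambda>m. (1 + 2 * K_max) * u3 m < 1) sequentially"
    using lim by (intro small) (auto intro!: tendsto_eq_intros)
  ultimately show ?thesis using eventually_gt_at_top[of 0]
  proof eventually_elim
    case (elim m)
    note est = weight_bound_estimates[OF \<open>0 < m\<close>, folded C_def u1_def u2_def u3_def]
    have p: "1 \<le> real m powr \<kappa>" by (rule weight_bound_le_power(1)[OF \<open>0 < m\<close>])
    have \<tau>: "1 \<le> real m powr \<tau>"
      using elim threshold_exponent_bounds(1)[OF \<gamma>_gt_1 \<gamma>'_neg] by (intro ge_one_powr_ge_zero) auto
    have pos: "0 < \<nu> m" "0 < \<epsilon> m" "0 < real m * \<nu> m * \<epsilon> m" using \<nu>_pos \<epsilon>_pos elim by simp_all
    have "(real m powr \<kappa>)^2 \<le> (real m powr \<kappa>)^5" "1 \<le> (real m powr \<kappa>)^5"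
      using p by (auto intro: power_increasing one_le_power)
    then have u3_ge: "\<epsilon> m / \<nu> m * (real m powr \<kappa>)^2 \<le> u3 m" "\<epsilon> m / \<nu> m * 1 \<le> u3 m"
      unfolding u3_def using pos by (intro mult_left_mono; simp)+
    have u3_nonneg: "0 \<le> u3 m" using u3_ge(2) pos by (smt (verit) divide_pos_pos)
    have split: "(1 + 2 * K_max) * u3 m = u3 m + 2 * K_max * u3 m" by (simp add: algebra_simps)
    have "2 * K_max * (\<epsilon> m / \<nu> m * (real m powr \<kappa>)^2) \<le> 2 * K_max * u3 m"
      using u3_ge(1) K_max_nonneg by (intro mult_left_mono) auto
    also have "\<dots> \<le> 1" using elim(3) u3_nonneg unfolding split by linarith
    finally have "2 * K_max * (\<epsilon> m / \<nu> m * (real m powr \<kappa>)^2) \<le> 1" .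
    then have scale: "2 * K_max * time_scale m \<le> \<nu> m / \<epsilon> m"
      unfolding time_scale_def using pos by (simp add: field_simps)
    have "2 * K_max * u3 m \<ge> 0" using K_max_nonneg u3_nonneg by simp
    then have "\<epsilon> m / \<nu> m \<le> 1" using u3_ge(2) elim(3) unfolding split by linarith
    then have r: "1 \<le> \<nu> m / \<epsilon> m" using pos by (simp add: field_simps)
    have "real m * \<nu> m * \<epsilon> m * (init_bound m)^2 \<le> real m * \<nu> m * \<epsilon> m * (weight_bound m)^3"
      using est(4) pos by (intro mult_left_mono) auto
    also have "\<dots> \<le> real m * \<nu> m * \<epsilon> m * (weight_bound m)^3 * real m powr \<tau>"
      using mult_left_mono[OF \<tau>, of "real m * \<nu> m * \<epsilon> m * (weight_bound m)^3"] pos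
        weight_bound_le_power(2,3)[OF \<open>0 < m\<close>] by simp
    also have "\<dots> \<le> C^3 * u1 m" by (rule est(1))
    finally have "CL * X * (real m * \<nu> m * \<epsilon> m * (init_bound m)^2) \<le> CL * X * (C^3 * u1 m)"
      using CL_ge_1 X_nonneg by (intro mult_left_mono) auto
    then have init: "real m * \<nu> m * \<epsilon> m * CL * X * (init_bound m)^2 \<le> 1"
      using elim(2) by (simp add: mult_ac)
    have "(real m * \<nu> m * \<epsilon> m * (weight_bound m)^3 + \<epsilon> m * (weight_bound m)^2) * real m powr \<tau> \<le> 1"
      using est(1,2) elim(1) by (simp add: algebra_simps)
    then have "real m * \<nu> m * \<epsilon> m * (weight_bound m)^3 + \<epsilon> m * (weight_bound m)^2 \<le> 1 / real m powr \<tau>"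
      using \<tau> elim(4) by (subst pos_le_divide_eq) auto
    then have "real m * \<nu> m * \<epsilon> m * (weight_bound m)^3 + \<epsilon> m * (weight_bound m)^2 \<le> real m powr (- \<tau>)"
      by (simp add: powr_minus divide_inverse)
    with elim(4) init r scale show ?case by blast
  qed
qed

lemma lin_error_tendsto_0: "(lin_error \<longlongrightarrow> 0) sequentially"
proof -
  define C where "C = 4 * real CARD('d) * (1 + K_max)"
  define u1 where "u1 m = real m * \<nu> m * \<epsilon> m * (real m powr \<kappa>)^9 * real m powr \<tau>" for m
  define u2 where "u2 m = \<epsilon> m * (real m powr \<kappa>)^6 * real m powr \<tau>" for m
  define u3 where "u3 m = \<epsilon> m / \<nu> m * (real m powr \<kappa>)^5" for m
  note lim = scales_tendsto_0[folded u1_def u2_def u3_def]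
  show ?thesis
  proof (rule tendsto_sandwich[OF _ _ tendsto_const])
    show "eventually (\<lambda>m. 0 \<le> lin_error m) sequentially"
      using eventually_gt_at_top[of 0]
    proof eventually_elim
      case (elim m)
      then have "0 \<le> weight_bound m" using weight_bound_le_power[OF elim] by linarith
      then show ?case unfolding lin_error_def using lin_error_coeff_nonneg \<nu>_pos[of m] \<epsilon>_pos[of m]
        by (intro mult_nonneg_nonneg add_nonneg_nonneg) (auto simp: time_scale_def)
    qed
    show "eventually (\<lambda>m. lin_error m \<le> lin_error_coeff * (C * u3 m + C^2 * u2 m + C^3 * u1 m)) sequentially"
      using eventually_gt_at_top[of 0]
    proof eventually_elim
      case (elim m)
      note est = weight_bound_estimates[OF elim, folded C_def u1_def u2_def u3_def]
      have \<tau>: "1 \<le> real m powr \<tau>"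
        using elim threshold_exponent_bounds(1)[OF \<gamma>_gt_1 \<gamma>'_neg] by (intro ge_one_powr_ge_zero) auto
      have "\<epsilon> m * (weight_bound m)^2 \<le> \<epsilon> m * (weight_bound m)^2 * real m powr \<tau>"
        using mult_left_mono[OF \<tau>, of "\<epsilon> m * (weight_bound m)^2"] \<epsilon>_pos[of m] by simp
      moreover have "real m * \<nu> m * \<epsilon> m * (weight_bound m)^3
          \<le> real m * \<nu> m * \<epsilon> m * (weight_bound m)^3 * real m powr \<tau>"
        using mult_left_mono[OF \<tau>, of "real m * \<nu> m * \<epsilon> m * (weight_bound m)^3"]
          \<epsilon>_pos[of m] \<nu>_pos[of m] weight_bound_le_power[OF elim] by simp
      ultimately show ?case
        unfolding lin_error_def using est lin_error_coeff_nonneg by (intro mult_left_mono add_mono) auto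
    qed
    show "((\<lambda>m. lin_error_coeff * (C * u3 m + C^2 * u2 m + C^3 * u1 m)) \<longlongrightarrow> 0) sequentially"
      using lim by (auto intro!: tendsto_eq_intros)
  qed
qed

lemma powr_growth_at_top: "filterlim (\<lambda>m. real m powr \<kappa>) at_top sequentially"
proof -
  have "((\<lambda>m. real m powr (- \<kappa>)) \<longlongrightarrow> 0) sequentially"
    using growth_exponent_bounds(1)[OF \<gamma>_gt_1 \<gamma>'_neg]
    by (intro tendsto_neg_powr filterlim_real_sequentially) auto
  then have "filterlim (\<lambda>m. inverse (real m powr (- \<kappa>))) at_top sequentially"
    by (rule filterlim_inverse_at_top) (use eventually_gt_at_top[of 0] in \<open>auto elim: eventually_mono\<close>)
  then show ?thesis by (simp add: powr_minus)
qed

lemma time_scale_over_init_bound: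
  shows "filterlim (\<lambda>m. time_scale m / init_bound m) at_top sequentially"
    and "((\<lambda>m. init_bound m / time_scale m) \<longlongrightarrow> 0) sequentially"
proof -
  have eq: "eventually (\<lambda>m. time_scale m / init_bound m = 1 / real CARD('d) * real m powr \<kappa>) sequentially"
    using eventually_gt_at_top[of 0]
    by eventually_elim (simp add: init_bound_def time_scale_def power2_eq_square)
  have "filterlim (\<lambda>m. 1 / real CARD('d) * real m powr \<kappa>) at_top sequentially"
    by (intro filterlim_tendsto_pos_mult_at_top[OF tendsto_const] powr_growth_at_top) simp
  then show lim: "filterlim (\<lambda>m. time_scale m / init_bound m) at_top sequentially"
    using filterlim_cong[OF refl refl eq] by blast
  show "((\<lambda>m. init_bound m / time_scale m) \<longlongrightarrow> 0) sequentially"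
    using tendsto_inverse_0_at_top[OF lim] by simp
qed

lemma eventually_linearization_witness:
  assumes "z \<noteq> 0"
    and good: "eventually (\<lambda>m. good_init \<kappa> m (a m 0) (w m 0)) sequentially"
  defines "\<zeta> \<equiv> norm z * (1 / sqrt 8)"
    and "\<rho> \<equiv> \<lambda>m. init_bound m / time_scale m + lin_error m"
  shows "eventually (\<lambda>m. \<exists>t \<in> {t. 0 \<le> t \<and>
      ereal t \<le> T_eff m (\<nu> m) (\<epsilon> m) (\<gamma>1 - \<gamma>2) (beta_bar (\<gamma>1 + \<gamma>2) (\<gamma>1 - \<gamma>2)) (a m) (w m)}.
      time_scale m / init_bound m * (\<zeta> - lin_error m)
        \<le> theta_w_norm m (\<lambda>k. w m t k - w m 0 k) / theta_w_norm m (w m 0)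
      \<and> 1 - \<rho> m / (\<zeta> - \<rho> m) \<le> theta_wz_norm m ((1 / norm z) *\<^sub>R z) (w m t) / theta_w_norm m (w m t))
    sequentially"
proof -
  note time_scale_over_init_bound(2)
  then have "(\<rho> \<longlongrightarrow> 0) sequentially"
    unfolding \<rho>_def using tendsto_add[OF _ lin_error_tendsto_0] by fastforce
  moreover have \<zeta>_pos: "0 < \<zeta>" unfolding \<zeta>_def using \<open>z \<noteq> 0\<close> by simp
  ultimately have "eventually (\<lambda>m. \<rho> m < \<zeta> / 2) sequentially"
    by (intro order_tendstoD(2)) auto
  then show ?thesis using good eventually_scale_conditions
  proof eventually_elim
    case (elim m)
    then have "0 < m" by blast
    interpret F: gradient_flow \<sigma> \<sigma>' \<sigma>'' CL n x y c m "\<nu> m" "\<epsilon> m" "a m" "w m"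
      by (rule flow)
    have r: "F.r = \<nu> m / \<epsilon> m" by (simp add: F.r_def)
    note init = good_init_consequences[OF elim(2) \<open>0 < m\<close>, folded init_bound_def]
    have lam_pos: "0 < time_scale m"
      unfolding time_scale_def using \<open>0 < m\<close> by simp
    define t where "t = time_scale m / (\<nu> m / \<epsilon> m)"
    note est = F.flow_estimates[where Q = "init_bound m" and lam = "time_scale m" and \<gamma>' = "\<gamma>1 - \<gamma>2"
        and \<beta> = "beta_bar (\<gamma>1 + \<gamma>2) (\<gamma>1 - \<gamma>2)"]
    have T: "ereal t \<le> T_eff m (\<nu> m) (\<epsilon> m) (\<gamma>1 - \<gamma>2) (beta_bar (\<gamma>1 + \<gamma>2) (\<gamma>1 - \<gamma>2)) (a m) (w m)"
      and lin: "\<And>k. k < m \<Longrightarrow> norm (w m t k - w m 0 k - (time_scale m * a m 0 k) *\<^sub>R z)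
                  \<le> time_scale m * lin_error m"
      using est \<open>0 < m\<close> init(1) elim(3) lam_pos
      unfolding r lin_error_def threshold_exponent_def t_def weight_bound_def by auto
    have "0 \<le> init_bound m / time_scale m"
      using weight_bound_le_power(2)[OF \<open>0 < m\<close>] lam_pos by simp
    moreover have "\<rho> m = init_bound m / time_scale m + lin_error m" by (simp add: \<rho>_def)
    ultimately have "lin_error m \<le> \<zeta>" and "2 * \<rho> m < \<zeta>"
      using elim(1) \<zeta>_pos by linarith+
    moreover have init_norm: "\<And>k. k < m \<Longrightarrow> norm (w m 0 k) \<le> init_bound m" using init(1) by blast
    ultimately have "time_scale m / init_bound m * (\<zeta> - lin_error m)
        \<le> theta_w_norm m (\<lambda>k. w m t k - w m 0 k) / theta_w_norm m (w m 0)"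
      and "1 - \<rho> m / (\<zeta> - \<rho> m) \<le> theta_wz_norm m ((1 / norm z) *\<^sub>R z) (w m t) / theta_w_norm m (w m t)"
      using theta_w_drift_ratio_ge[OF lam_pos init_norm init(2,3) lin]
        theta_wz_ratio_ge_of_linearization[OF \<open>0 < m\<close> lam_pos init_norm init(2) lin]
      unfolding \<zeta>_def \<rho>_def by auto
    moreover have "t \<ge> 0" unfolding t_def using lam_pos \<nu>_pos[of m] \<epsilon>_pos[of m] by simp
    ultimately show ?case using T by blast
  qed
qed

lemma ratios_tendsto:
  assumes "z \<noteq> 0"
    and good: "eventually (\<lambda>m. good_init \<kappa> m (a m 0) (w m 0)) sequentially"
  defines "T \<equiv> \<lambda>m. T_eff m (\<nu> m) (\<epsilon> m) (\<gamma>1 - \<gamma>2) (beta_bar (\<gamma>1 + \<gamma>2) (\<gamma>1 - \<gamma>2)) (a m) (w m)"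
  shows "((\<lambda>m. SUP t \<in> {t. 0 \<le> t \<and> ereal t \<le> T m}.
            ereal (theta_w_norm m (\<lambda>k. w m t k - w m 0 k) / theta_w_norm m (w m 0))) \<longlongrightarrow> \<infinity>) sequentially"
    and "((\<lambda>m. SUP t \<in> {t. 0 \<le> t \<and> ereal t \<le> T m}.
            ereal (theta_wz_norm m ((1 / norm z) *\<^sub>R z) (w m t) / theta_w_norm m (w m t))) \<longlongrightarrow> ereal 1) sequentially"
proof -
  define \<zeta> where "\<zeta> = norm z * (1 / sqrt 8)"
  define \<rho> where "\<rho> m = init_bound m / time_scale m + lin_error m" for m
  note witness = eventually_linearization_witness[OF assms(1,2), folded \<zeta>_def \<rho>_def T_def]
  have \<zeta>_pos: "0 < \<zeta>" unfolding \<zeta>_def using \<open>z \<noteq> 0\<close> by simp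
  have "filterlim (\<lambda>m. (\<zeta> - lin_error m) * (time_scale m / init_bound m)) at_top sequentially"
    using \<zeta>_pos by (intro filterlim_tendsto_pos_mult_at_top[OF _ _ time_scale_over_init_bound(1)])
      (auto intro!: tendsto_eq_intros lin_error_tendsto_0)
  then show "((\<lambda>m. SUP t \<in> {t. 0 \<le> t \<and> ereal t \<le> T m}.
      ereal (theta_w_norm m (\<lambda>k. w m t k - w m 0 k) / theta_w_norm m (w m 0))) \<longlongrightarrow> \<infinity>) sequentially"
    by (intro SUP_tendsto_PInfty_of_witness[OF eventually_mono[OF witness]]) (auto simp: T_def mult.commute)
  have "(\<rho> \<longlongrightarrow> 0) sequentially"
    unfolding \<rho>_def using tendsto_add[OF time_scale_over_init_bound(2) lin_error_tendsto_0] by simp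
  then have "((\<lambda>m. \<rho> m / (\<zeta> - \<rho> m)) \<longlongrightarrow> 0 / (\<zeta> - 0)) sequentially"
    using \<zeta>_pos by (intro tendsto_intros) auto
  then show "((\<lambda>m. SUP t \<in> {t. 0 \<le> t \<and> ereal t \<le> T m}.
      ereal (theta_wz_norm m ((1 / norm z) *\<^sub>R z) (w m t) / theta_w_norm m (w m t))) \<longlongrightarrow> ereal 1) sequentially"
    using \<open>z \<noteq> 0\<close>
    by (intro SUP_tendsto_1_of_witness[OF eventually_mono[OF witness]] theta_wz_ratio_le_1) (auto simp: T_def)
qed

end

theorem theorem8:
  fixes M :: "'\<omega> measure"
    and \<delta> :: real
    and \<sigma> \<sigma>' \<sigma>'' :: "real \<Rightarrow> real" and CL :: real
    and n :: nat and x :: "nat \<Rightarrow> real^'d" and y :: "nat \<Rightarrow> real" and c :: real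
    and \<nu> \<epsilon> :: "nat \<Rightarrow> real" and \<gamma>1 \<gamma>2 :: real
    and A :: "nat \<Rightarrow> nat \<Rightarrow> '\<omega> \<Rightarrow> real" and W :: "nat \<Rightarrow> nat \<Rightarrow> '\<omega> \<Rightarrow> real^'d"
    and a :: "'\<omega> \<Rightarrow> nat \<Rightarrow> real \<Rightarrow> nat \<Rightarrow> real"
    and w :: "'\<omega> \<Rightarrow> nat \<Rightarrow> real \<Rightarrow> nat \<Rightarrow> real^'d"
  assumes delta: "0 < \<delta>" "\<delta> < 1"
    \<comment> \<open>Assumption (B)\<close>
    and sigma_d1: "\<And>u. (\<sigma> has_real_derivative \<sigma>' u) (at u)"
    and sigma_d2: "\<And>u. (\<sigma>' has_real_derivative \<sigma>'' u) (at u)"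
    and sigma_C2: "continuous_on UNIV \<sigma>''"
    and CL_pos: "CL > 0"
    and sigma_b1: "\<And>u. \<bar>\<sigma>' u\<bar> \<le> CL"
    and sigma_b2: "\<And>u. \<bar>\<sigma>'' u\<bar> \<le> CL"
    and sigma0: "\<sigma> 0 = 0" and sigma'0: "\<sigma>' 0 = 1"
    \<comment> \<open>Assumption (D2)\<close>
    and n_pos: "n > 0"
    and c_pos: "c > 0"
    and x_lb: "\<And>i. i < n \<Longrightarrow> norm (x i) \<ge> 1 / c"
    and y_ub: "\<And>i. i < n \<Longrightarrow> \<bar>y i\<bar> \<le> c"
    and z_lb: "1 / c \<le> norm ((1 / real n) *\<^sub>R (\<Sum>i<n. y i *\<^sub>R x i))"
    and z_ub: "norm ((1 / real n) *\<^sub>R (\<Sum>i<n. y i *\<^sub>R x i)) \<le> c"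
    \<comment> \<open>scales and scaling limits\<close>
    and nu_pos: "\<And>m. \<nu> m > 0" and eps_pos: "\<And>m. \<epsilon> m > 0"
    and lim1: "((\<lambda>m. - ln (\<nu> m) / ln (real m)) \<longlongrightarrow> \<gamma>1) sequentially"
    and lim2: "((\<lambda>m. - ln (\<epsilon> m) / ln (real m)) \<longlongrightarrow> \<gamma>2) sequentially"
    and gamma_gt: "\<gamma>1 + \<gamma>2 > 1"
    and gamma'_neg: "\<gamma>1 - \<gamma>2 < 0"
    \<comment> \<open>random initialization: for each width m, all a_k(0), w_k(0)_j (k < m) are
        independent standard Gaussians on the probability space M\<close>
    and M_prob: "prob_space M"
    and init_indep: "\<And>m. prob_space.indep_vars M (\<lambda>_. borel)
        (\<lambda>i. case i of Inl k \<Rightarrow> A m k | Inr (k, j) \<Rightarrow> (\<lambda>\<omega>. W m k \<omega> $ j))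
        (Inl ` {..<m} \<union> Inr ` ({..<m} \<times> UNIV))"
    and init_a: "\<And>m k. k < m \<Longrightarrow>
        distributed M lborel (A m k) (\<lambda>u. ennreal (std_normal_density u))"
    and init_w: "\<And>m k j. k < m \<Longrightarrow>
        distributed M lborel (\<lambda>\<omega>. W m k \<omega> $ j) (\<lambda>u. ennreal (std_normal_density u))"
    \<comment> \<open>gradient-flow trajectories started at the initialization\<close>
    and a_init: "\<And>\<omega> m k. \<omega> \<in> space M \<Longrightarrow> k < m \<Longrightarrow> a \<omega> m 0 k = A m k \<omega>"
    and w_init: "\<And>\<omega> m k. \<omega> \<in> space M \<Longrightarrow> k < m \<Longrightarrow> w \<omega> m 0 k = W m k \<omega>"
    and a_ode: "\<And>\<omega> m k t. \<omega> \<in> space M \<Longrightarrow> k < m \<Longrightarrow> 0 \<le> t \<Longrightarrow>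
        ((\<lambda>s. a \<omega> m s k) has_real_derivative
          (- (\<epsilon> m / \<nu> m) * (1 / real n) *
             (\<Sum>i<n. (net_out m (\<nu> m) (\<epsilon> m) \<sigma> (a \<omega> m t) (w \<omega> m t) (x i) - y i)
                     * (\<sigma> (\<epsilon> m * (w \<omega> m t k \<bullet> x i)) / \<epsilon> m))))
        (at t within {0..})"
    and w_ode: "\<And>\<omega> m k t. \<omega> \<in> space M \<Longrightarrow> k < m \<Longrightarrow> 0 \<le> t \<Longrightarrow>
        ((\<lambda>s. w \<omega> m s k) has_vector_derivative
          (- (\<nu> m / \<epsilon> m) * (1 / real n)) *\<^sub>R
             (\<Sum>i<n. ((net_out m (\<nu> m) (\<epsilon> m) \<sigma> (a \<omega> m t) (w \<omega> m t) (x i) - y i)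
                     * a \<omega> m t k * \<sigma>' (\<epsilon> m * (w \<omega> m t k \<bullet> x i))) *\<^sub>R x i))
        (at t within {0..})"
  shows "\<exists>E \<in> sets M. measure M E \<ge> 1 - \<delta> \<and>
    (\<forall>\<omega> \<in> E.
      let zhat = (1 / norm ((1 / real n) *\<^sub>R (\<Sum>i<n. y i *\<^sub>R x i))) *\<^sub>R
                   ((1 / real n) *\<^sub>R (\<Sum>i<n. y i *\<^sub>R x i));
          T = (\<lambda>m. T_eff m (\<nu> m) (\<epsilon> m) (\<gamma>1 - \<gamma>2) (beta_bar (\<gamma>1 + \<gamma>2) (\<gamma>1 - \<gamma>2))
                        (a \<omega> m) (w \<omega> m))
      in ((\<lambda>m. SUP t \<in> {t. 0 \<le> t \<and> ereal t \<le> T m}.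
              ereal (theta_w_norm m (\<lambda>k. w \<omega> m t k - w \<omega> m 0 k) / theta_w_norm m (w \<omega> m 0)))
            \<longlongrightarrow> \<infinity>) sequentially
       \<and> ((\<lambda>m. SUP t \<in> {t. 0 \<le> t \<and> ereal t \<le> T m}.
              ereal (theta_wz_norm m zhat (w \<omega> m t) / theta_w_norm m (w \<omega> m t)))
            \<longlongrightarrow> ereal 1) sequentially)"
proof -
  interpret P: prob_space M by (rule M_prob)
  define \<kappa> where "\<kappa> = growth_exponent \<gamma>1 \<gamma>2"
  have "0 < \<kappa>" unfolding \<kappa>_def using growth_exponent_bounds(1)[OF gamma_gt gamma'_neg] .
  then obtain E where E: "E \<in> sets M" "1 - \<delta> \<le> measure M E"
    and good: "\<And>\<omega>. \<omega> \<in> E \<Longrightarrow> eventually (\<lambda>m. good_init \<kappa> m (\<lambda>k. A m k \<omega>) (\<lambda>k. W m k \<omega>)) sequentially"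
    using P.eventually_good_init[OF init_indep init_a init_w _ delta(1)] by blast
  have z_ne: "(1 / real n) *\<^sub>R (\<Sum>i<n. y i *\<^sub>R x i) \<noteq> 0" using z_lb c_pos n_pos by auto
  have "let zhat = (1 / norm ((1 / real n) *\<^sub>R (\<Sum>i<n. y i *\<^sub>R x i))) *\<^sub>R
        ((1 / real n) *\<^sub>R (\<Sum>i<n. y i *\<^sub>R x i));
      T = (\<lambda>m. T_eff m (\<nu> m) (\<epsilon> m) (\<gamma>1 - \<gamma>2) (beta_bar (\<gamma>1 + \<gamma>2) (\<gamma>1 - \<gamma>2)) (a \<omega> m) (w \<omega> m))
    in ((\<lambda>m. SUP t \<in> {t. 0 \<le> t \<and> ereal t \<le> T m}.
          ereal (theta_w_norm m (\<lambda>k. w \<omega> m t k - w \<omega> m 0 k) / theta_w_norm m (w \<omega> m 0))) \<longlongrightarrow> \<infinity>) sequentially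
     \<and> ((\<lambda>m. SUP t \<in> {t. 0 \<le> t \<and> ereal t \<le> T m}.
          ereal (theta_wz_norm m zhat (w \<omega> m t) / theta_w_norm m (w \<omega> m t))) \<longlongrightarrow> ereal 1) sequentially"
    if "\<omega> \<in> E" for \<omega>
  proof -
    have \<omega>: "\<omega> \<in> space M" using E(1) that sets.sets_into_space by blast
    have flow: "gradient_flow \<sigma> \<sigma>' \<sigma>'' CL n x y c m (\<nu> m) (\<epsilon> m) (a \<omega> m) (w \<omega> m)" for m
      by unfold_locales (use sigma_d1 sigma_d2 sigma_b1 sigma_b2 sigma0 sigma'0 n_pos y_ub nu_pos eps_pos
          a_ode[OF \<omega>] w_ode[OF \<omega>] in auto)
    interpret F: gradient_flow_family \<sigma> \<sigma>' \<sigma>'' CL n x y c \<nu> \<epsilon> \<gamma>1 \<gamma>2 "a \<omega>" "w \<omega>"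
      using gradient_flow.axioms(1)[OF flow] flow lim1 lim2 gamma_gt gamma'_neg
      by (intro gradient_flow_family.intro gradient_flow_family_axioms.intro) auto
    have "eventually (\<lambda>m. good_init \<kappa> m (a \<omega> m 0) (w \<omega> m 0)) sequentially"
      using good[OF that] eventually_gt_at_top[of 0]
      by eventually_elim (simp add: good_init_cong[OF _ a_init[OF \<omega>] w_init[OF \<omega>]])
    then show ?thesis
      using F.ratios_tendsto z_ne
      unfolding Let_def F.z_def \<kappa>_def by simp
  qed
  with E show ?thesis by blast
qed

end
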